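(* Let $R$ be a discrete valuation ring containing a field, with maximal ideal $\mathfrak m$ and fraction field $F$. Then for every integer $n\ge0$: (1) $(1+\mathfrak m)K^M_n(F)\subseteq\widehat K^M_{n+1}(R)$; (2) $(1+\mathfrak m^{m+n})K^M_n(F)\subseteq(1+\mathfrak m^m)\widehat K^M_n(R)$ for all $m\ge1$.
   Context: $\widehat K^M_j(R)$ is the kernel of the residue (tame symbol) map $K^M_j(F)\to K^M_{j-1}(R/\mathfrak m)$ (Kerz's improved Milnor $K$-theory of $R$, viewed inside $K^M_j(F)$). For a subgroup $A\subseteq K^M_n(F)$ and a subgroup $U\subseteq F^\times$, $UA$ denotes the subgroup of $K^M_{n+1}(F)$ generated by the products $\{u\}\cdot a$ with $u\in U$, $a\in A$. *)

theory Defs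
  imports "HOL-Algebra.Algebra" "HOL-Algebra.Free_Abelian_Groups"
begin

definition KM_gens :: "('a, 'b) ring_scheme \<Rightarrow> nat \<Rightarrow> 'a list set" where
  "KM_gens K n = {us. length us = n \<and> set us \<subseteq> carrier K - {\<zero>\<^bsub>K\<^esub>}}"

definition KM_free :: "('a, 'b) ring_scheme \<Rightarrow> nat \<Rightarrow> ('a list \<Rightarrow>\<^sub>0 int) monoid" where
  "KM_free K n = free_Abelian_group (KM_gens K n)"

definition KM_rels :: "('a, 'b) ring_scheme \<Rightarrow> nat \<Rightarrow> ('a list \<Rightarrow>\<^sub>0 int) set" where
  "KM_rels K n =
     {frag_of (xs @ [a \<otimes>\<^bsub>K\<^esub> b] @ ys) - frag_of (xs @ [a] @ ys) - frag_of (xs @ [b] @ ys)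
        | xs a b ys. xs @ [a] @ ys \<in> KM_gens K n \<and> xs @ [b] @ ys \<in> KM_gens K n
                     \<and> xs @ [a \<otimes>\<^bsub>K\<^esub> b] @ ys \<in> KM_gens K n}
   \<union> {frag_of (xs @ [a, b] @ ys) | xs a b ys.
        xs @ [a, b] @ ys \<in> KM_gens K n \<and> a \<oplus>\<^bsub>K\<^esub> b = \<one>\<^bsub>K\<^esub>}"

definition KM_relsub :: "('a, 'b) ring_scheme \<Rightarrow> nat \<Rightarrow> ('a list \<Rightarrow>\<^sub>0 int) set" where
  "KM_relsub K n = generate (KM_free K n) (KM_rels K n)"

text \<open>The Milnor K-group K^M_n(K) (written multiplicatively as a HOL-Algebra group).\<close>
definition KM :: "('a, 'b) ring_scheme \<Rightarrow> nat \<Rightarrow> ('a list \<Rightarrow>\<^sub>0 int) set monoid" where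
  "KM K n = KM_free K n Mod KM_relsub K n"

definition symb :: "('a, 'b) ring_scheme \<Rightarrow> 'a list \<Rightarrow> ('a list \<Rightarrow>\<^sub>0 int) set" where
  "symb K us = KM_relsub K (length us) #>\<^bsub>KM_free K (length us)\<^esub> frag_of us"

definition lmul :: "('a, 'b) ring_scheme \<Rightarrow> nat \<Rightarrow> 'a \<Rightarrow> ('a list \<Rightarrow>\<^sub>0 int) set \<Rightarrow> ('a list \<Rightarrow>\<^sub>0 int) set" where
  "lmul K n u = (SOME h. h \<in> hom (KM K n) (KM K (Suc n)) \<and>
                   (\<forall>us \<in> KM_gens K n. h (symb K us) = symb K (u # us)))"

text \<open>UA: the subgroup of K^M_{n+1} generated by the products {u}\<cdot>a, u \<in> U, a \<in> A.\<close>
definition prod_sub :: "('a, 'b) ring_scheme \<Rightarrow> nat \<Rightarrow> 'a set \<Rightarrow> ('a list \<Rightarrow>\<^sub>0 int) set set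
                          \<Rightarrow> ('a list \<Rightarrow>\<^sub>0 int) set set" where
  "prod_sub K n U A = generate (KM K (Suc n)) {lmul K n u a | u a. u \<in> U \<and> a \<in> A}"

definition fieldR :: "'a::field ring" where
  "fieldR = \<lparr>carrier = UNIV, monoid.mult = (*), one = 1, ring.zero = 0, ring.add = (+)\<rparr>"

text \<open>A normalized discrete valuation v on F (value at 0 irrelevant).\<close>
definition discrete_valuation :: "('a::field \<Rightarrow> int) \<Rightarrow> bool" where
  "discrete_valuation v \<longleftrightarrow>
     (\<forall>x y. x \<noteq> 0 \<longrightarrow> y \<noteq> 0 \<longrightarrow> v (x * y) = v x + v y) \<and>
     (\<forall>x y. x \<noteq> 0 \<longrightarrow> y \<noteq> 0 \<longrightarrow> x + y \<noteq> 0 \<longrightarrow> v (x + y) \<ge> min (v x) (v y)) \<and>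
     (\<exists>\<pi>. \<pi> \<noteq> 0 \<and> v \<pi> = 1)"

definition val_ring :: "('a::field \<Rightarrow> int) \<Rightarrow> 'a set" where
  "val_ring v = {x. x = 0 \<or> v x \<ge> 0}"

definition valR :: "('a::field \<Rightarrow> int) \<Rightarrow> 'a ring" where
  "valR v = fieldR\<lparr>carrier := val_ring v\<rparr>"

definition mpow :: "('a::field \<Rightarrow> int) \<Rightarrow> nat \<Rightarrow> 'a set" where
  "mpow v k = {x. x = 0 \<or> v x \<ge> int k}"

definition resfield :: "('a::field \<Rightarrow> int) \<Rightarrow> 'a set ring" where
  "resfield v = valR v Quot mpow v 1"

definition res :: "('a::field \<Rightarrow> int) \<Rightarrow> 'a \<Rightarrow> 'a set" where
  "res v x = mpow v 1 +>\<^bsub>valR v\<^esub> x"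

definition one_plus :: "('a::field \<Rightarrow> int) \<Rightarrow> nat \<Rightarrow> 'a set" where
  "one_plus v k = {1 + x | x. x \<in> mpow v k}"

definition tame_prop :: "('a::field \<Rightarrow> int) \<Rightarrow> nat \<Rightarrow> (('a list \<Rightarrow>\<^sub>0 int) set \<Rightarrow> ('a set list \<Rightarrow>\<^sub>0 int) set) \<Rightarrow> bool" where
  "tame_prop v n d \<longleftrightarrow>
     d \<in> hom (KM fieldR (Suc n)) (KM (resfield v) n) \<and>
     (\<forall>\<pi> us. \<pi> \<noteq> 0 \<and> v \<pi> = 1 \<and> length us = n \<and> (\<forall>u\<in>set us. u \<noteq> 0 \<and> v u = 0)
        \<longrightarrow> d (symb fieldR (\<pi> # us)) = symb (resfield v) (map (res v) us)) \<and>
     (\<forall>us. length us = Suc n \<and> (\<forall>u\<in>set us. u \<noteq> 0 \<and> v u = 0)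
        \<longrightarrow> d (symb fieldR us) = \<one>\<^bsub>KM (resfield v) n\<^esub>)"

definition tame :: "('a::field \<Rightarrow> int) \<Rightarrow> nat \<Rightarrow> ('a list \<Rightarrow>\<^sub>0 int) set \<Rightarrow> ('a set list \<Rightarrow>\<^sub>0 int) set" where
  "tame v n = (SOME d. tame_prop v n d)"

text \<open>Kerz's improved Milnor K-group \<widehat>K^M_j(R) \<subseteq> K^M_j(F): kernel of the tame symbol
  (all of K^M_0(F) for j = 0).\<close>
fun hatK :: "('a::field \<Rightarrow> int) \<Rightarrow> nat \<Rightarrow> ('a list \<Rightarrow>\<^sub>0 int) set set" where
  "hatK v 0 = carrier (KM fieldR 0)"
| "hatK v (Suc n) = kernel (KM fieldR (Suc n)) (KM (resfield v) n) (tame v n)"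

end

theory Submission
  imports Defs
begin

(* The tame symbol d : K_{n+1}(F) -> K_n(k) of a discrete valuation is constructed on symbols by
   writing every entry as a power of a uniformizer pi times a unit; the resulting expression is
   multilinear and kills Steinberg symbols, so it descends to Milnor K-theory.

   Writing the entries of a symbol {u, x_1, ..., x_n} as x_i = pi^(e_i) w_i with units w_i and
   moving the factors {pi} to the front, where {pi, pi} = {pi, -1} absorbs all but one of them,
   shows that a subgroup containing all symbols {u, w_1, ..., w_n} and {u, pi, w_2, ..., w_n} with
   units w_i contains {u, x_1, ..., x_n}.  For u in 1 + m the tame symbol kills both kinds, since
   u has residue 1; this gives (1).  For (2) it remains to treat {u, pi, w_2, ..., w_n} with
   u = 1 - y pi in 1 + m^(m+1): the Steinberg relations {u, y pi} = 1 and {z, 1 - z} = 1 for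
   z = (1 - pi) y / u put both {u, pi}^(v y + 1) and {u, pi}^(v y) into (1 + m^m) \hat K_{n+1}(R),
   up to symbols {u', w, ...} with u' in 1 + m^m and units w, which lie there by definition.
   Hence 1 + m^(m+1) already suffices in (2) when n >= 1, and the hypothesis that R contains a
   field is not needed. *)

section \<open>Milnor K-groups of a ring\<close>

lemma comm_group_KM_free: "comm_group (KM_free K n)"
  unfolding KM_free_def by (rule abelian_free_Abelian_group)

lemma group_KM_free: "group (KM_free K n)"
  unfolding KM_free_def by simp

lemma KM_free_carrier_iff: "x \<in> carrier (KM_free K n) \<longleftrightarrow> Poly_Mapping.keys x \<subseteq> KM_gens K n"
  unfolding KM_free_def by simp

lemma KM_free_mult [simp]: "x \<otimes>\<^bsub>KM_free K n\<^esub> y = x + y"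
  unfolding KM_free_def by simp

lemma KM_free_one [simp]: "\<one>\<^bsub>KM_free K n\<^esub> = 0"
  unfolding KM_free_def by simp

lemma KM_free_inv [simp]: "x \<in> carrier (KM_free K n) \<Longrightarrow> inv\<^bsub>KM_free K n\<^esub> x = - x"
  unfolding KM_free_def by simp

lemma frag_of_in_KM_free [simp]: "frag_of us \<in> carrier (KM_free K n) \<longleftrightarrow> us \<in> KM_gens K n"
  unfolding KM_free_def by simp

lemma KM_gens_iff: "us \<in> KM_gens K n \<longleftrightarrow> length us = n \<and> (\<forall>u\<in>set us. u \<in> carrier K \<and> u \<noteq> \<zero>\<^bsub>K\<^esub>)"
  unfolding KM_gens_def by auto

lemma KM_rels_subset: "KM_rels K n \<subseteq> carrier (KM_free K n)"
proof
  fix r assume "r \<in> KM_rels K n"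
  then show "r \<in> carrier (KM_free K n)"
    unfolding KM_rels_def KM_free_carrier_iff by (auto dest!: subsetD[OF keys_diff])
qed

lemma subgroup_KM_relsub: "subgroup (KM_relsub K n) (KM_free K n)"
  unfolding KM_relsub_def by (rule group.generate_is_subgroup[OF group_KM_free KM_rels_subset])

lemma normal_KM_relsub: "KM_relsub K n \<lhd> KM_free K n"
  by (rule comm_group.subgroup_imp_normal[OF comm_group_KM_free subgroup_KM_relsub])

lemma comm_group_KM: "comm_group (KM K n)"
  unfolding KM_def by (rule comm_group.abelian_FactGroup[OF comm_group_KM_free subgroup_KM_relsub])

lemma group_KM: "group (KM K n)"
  using comm_group_KM comm_group.axioms(2) by blast

abbreviation KM_class :: "('a, 'b) ring_scheme \<Rightarrow> nat \<Rightarrow> ('a list \<Rightarrow>\<^sub>0 int) \<Rightarrow> ('a list \<Rightarrow>\<^sub>0 int) set"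
  where "KM_class K n a \<equiv> KM_relsub K n #>\<^bsub>KM_free K n\<^esub> a"

lemma group_hom_KM_class: "group_hom (KM_free K n) (KM K n) (KM_class K n)"
  unfolding group_hom_def group_hom_axioms_def KM_def
  using normal.r_coset_hom_Mod[OF normal_KM_relsub] group_KM_free group_KM[unfolded KM_def] by blast

lemma KM_carrier: "carrier (KM K n) = KM_class K n ` carrier (KM_free K n)"
  unfolding KM_def carrier_FactGroup ..

lemma KM_class_relation: "r \<in> KM_relsub K n \<Longrightarrow> KM_class K n r = \<one>\<^bsub>KM K n\<^esub>"
  using subgroup.rcos_const[OF subgroup_KM_relsub group_KM_free] unfolding KM_def by simp

lemma symb_eq_KM_class: "us \<in> KM_gens K n \<Longrightarrow> symb K us = KM_class K n (frag_of us)"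
  unfolding symb_def KM_gens_def by auto

lemma symb_closed: "us \<in> KM_gens K n \<Longrightarrow> symb K us \<in> carrier (KM K n)"
  unfolding KM_carrier using symb_eq_KM_class frag_of_in_KM_free by blast

lemma KM_induct [consumes 1, case_names one symb diff]:
  assumes x: "x \<in> carrier (KM K n)"
    and one: "P \<one>\<^bsub>KM K n\<^esub>"
    and symb: "\<And>us. us \<in> KM_gens K n \<Longrightarrow> P (symb K us)"
    and diff: "\<And>x y. x \<in> carrier (KM K n) \<Longrightarrow> y \<in> carrier (KM K n) \<Longrightarrow> P x \<Longrightarrow> P y
                  \<Longrightarrow> P (x \<otimes>\<^bsub>KM K n\<^esub> inv\<^bsub>KM K n\<^esub> y)"
  shows "P x"
proof -
  interpret q: group_hom "KM_free K n" "KM K n" "KM_class K n" by (rule group_hom_KM_class)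
  obtain c where c: "c \<in> carrier (KM_free K n)" "x = KM_class K n c" using x KM_carrier by blast
  have "Poly_Mapping.keys c \<subseteq> KM_gens K n" using c KM_free_carrier_iff by blast
  then have "P (KM_class K n c)"
  proof (rule free_Abelian_group_induct[where P = "\<lambda>c. P (KM_class K n c)"])
    show "P (KM_class K n 0)" using one q.hom_one by simp
  next
    fix a b
    assume "Poly_Mapping.keys a \<subseteq> KM_gens K n" "Poly_Mapping.keys b \<subseteq> KM_gens K n"
      and IH: "P (KM_class K n a)" "P (KM_class K n b)"
    then have ab: "a \<in> carrier (KM_free K n)" "b \<in> carrier (KM_free K n)"
      by (simp_all add: KM_free_carrier_iff)
    then have "KM_class K n (a - b) = KM_class K n a \<otimes>\<^bsub>KM K n\<^esub> inv\<^bsub>KM K n\<^esub> KM_class K n b"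
      using q.hom_mult[OF ab(1) group.inv_closed[OF group_KM_free ab(2)]] q.hom_inv[OF ab(2)] by simp
    then show "P (KM_class K n (a - b))" using diff IH ab by simp
  next
    fix us assume "us \<in> KM_gens K n"
    then show "P (KM_class K n (frag_of us))" using symb symb_eq_KM_class by metis
  qed
  then show ?thesis using c by simp
qed

lemma KM_hom_eqI:
  assumes "group G" "h1 \<in> hom (KM K n) G" "h2 \<in> hom (KM K n) G"
    and "\<And>us. us \<in> KM_gens K n \<Longrightarrow> h1 (symb K us) = h2 (symb K us)"
    and "x \<in> carrier (KM K n)"
  shows "h1 x = h2 x"
proof -
  interpret h1: group_hom "KM K n" G h1 using assms by (simp add: group_hom_def group_hom_axioms_def group_KM)
  interpret h2: group_hom "KM K n" G h2 using assms by (simp add: group_hom_def group_hom_axioms_def group_KM)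
  show ?thesis
    using assms(5) by (induction x rule: KM_induct) (simp_all add: assms(4))
qed

lemma KM_rels_subset_kernel:
  assumes G: "group G" and h: "h \<in> hom (KM_free K n) G"
    and h_mult: "\<And>xs a b ys. xs @ [a] @ ys \<in> KM_gens K n \<Longrightarrow> xs @ [b] @ ys \<in> KM_gens K n
              \<Longrightarrow> xs @ [a \<otimes>\<^bsub>K\<^esub> b] @ ys \<in> KM_gens K n \<Longrightarrow> h (frag_of (xs @ [a \<otimes>\<^bsub>K\<^esub> b] @ ys))
                = h (frag_of (xs @ [a] @ ys)) \<otimes>\<^bsub>G\<^esub> h (frag_of (xs @ [b] @ ys))"
    and h_steinberg: "\<And>xs a b ys. xs @ [a, b] @ ys \<in> KM_gens K n \<Longrightarrow> a \<oplus>\<^bsub>K\<^esub> b = \<one>\<^bsub>K\<^esub>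
              \<Longrightarrow> h (frag_of (xs @ [a, b] @ ys)) = \<one>\<^bsub>G\<^esub>"
  shows "KM_rels K n \<subseteq> kernel (KM_free K n) G h"
proof
  interpret h: group_hom "KM_free K n" G h
    by (simp add: group_hom_def group_hom_axioms_def group_KM_free h G)
  fix r assume r: "r \<in> KM_rels K n"
  have "h r = \<one>\<^bsub>G\<^esub>"
    using r unfolding KM_rels_def
  proof (elim UnE CollectE exE conjE)
    fix xs a b ys
    let ?A = "frag_of (xs @ [a] @ ys)" and ?B = "frag_of (xs @ [b] @ ys)"
      and ?C = "frag_of (xs @ [a \<otimes>\<^bsub>K\<^esub> b] @ ys)"
    assume r: "r = ?C - ?A - ?B" and gens: "xs @ [a] @ ys \<in> KM_gens K n" "xs @ [b] @ ys \<in> KM_gens K n"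
      "xs @ [a \<otimes>\<^bsub>K\<^esub> b] @ ys \<in> KM_gens K n"
    have AB: "?A \<otimes>\<^bsub>KM_free K n\<^esub> ?B \<in> carrier (KM_free K n)"
      by (rule monoid.m_closed[OF group.is_monoid[OF group_KM_free]]) (use gens in simp_all)
    then have "r = ?C \<otimes>\<^bsub>KM_free K n\<^esub> inv\<^bsub>KM_free K n\<^esub> (?A \<otimes>\<^bsub>KM_free K n\<^esub> ?B)"
      using r by (simp add: diff_diff_eq)
    then have "h r = h ?C \<otimes>\<^bsub>G\<^esub> inv\<^bsub>G\<^esub> (h ?A \<otimes>\<^bsub>G\<^esub> h ?B)"
      using gens AB by (simp add: h.hom_mult h.hom_inv del: KM_free_mult KM_free_inv)
    then show "h r = \<one>\<^bsub>G\<^esub>"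
      using gens h_mult[OF gens] by simp
  next
    fix xs a b ys
    assume "r = frag_of (xs @ [a, b] @ ys)" and gen: "xs @ [a, b] @ ys \<in> KM_gens K n"
      and "a \<oplus>\<^bsub>K\<^esub> b = \<one>\<^bsub>K\<^esub>"
    then show "h r = \<one>\<^bsub>G\<^esub>" using h_steinberg[OF gen] by simp
  qed
  then show "r \<in> kernel (KM_free K n) G h"
    using r KM_rels_subset unfolding kernel_def by blast
qed

lemma KM_universal:
  assumes G: "comm_group G"
    and f: "\<And>us. us \<in> KM_gens K n \<Longrightarrow> f us \<in> carrier G"
    and f_mult: "\<And>xs a b ys. xs @ [a] @ ys \<in> KM_gens K n \<Longrightarrow> xs @ [b] @ ys \<in> KM_gens K n
              \<Longrightarrow> xs @ [a \<otimes>\<^bsub>K\<^esub> b] @ ys \<in> KM_gens K n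
              \<Longrightarrow> f (xs @ [a \<otimes>\<^bsub>K\<^esub> b] @ ys) = f (xs @ [a] @ ys) \<otimes>\<^bsub>G\<^esub> f (xs @ [b] @ ys)"
    and f_steinberg: "\<And>xs a b ys. xs @ [a, b] @ ys \<in> KM_gens K n \<Longrightarrow> a \<oplus>\<^bsub>K\<^esub> b = \<one>\<^bsub>K\<^esub>
              \<Longrightarrow> f (xs @ [a, b] @ ys) = \<one>\<^bsub>G\<^esub>"
  shows "\<exists>h \<in> hom (KM K n) G. \<forall>us \<in> KM_gens K n. h (symb K us) = f us"
proof -
  interpret G: comm_group G by (rule G)
  obtain h0 where h0: "h0 \<in> hom (KM_free K n) G" "\<And>us. us \<in> KM_gens K n \<Longrightarrow> h0 (frag_of us) = f us"
    using G.free_Abelian_group_universal[of f "KM_gens K n"] f unfolding KM_free_def by blast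
  interpret h0: group_hom "KM_free K n" G h0
    by (simp add: group_hom_def group_hom_axioms_def group_KM_free h0(1) G.group_axioms)
  have "KM_rels K n \<subseteq> kernel (KM_free K n) G h0"
    by (rule KM_rels_subset_kernel[OF G.group_axioms h0(1)]) (use f_mult f_steinberg in \<open>simp_all add: h0(2)\<close>)
  then have relsub: "KM_relsub K n \<subseteq> kernel (KM_free K n) G h0"
    unfolding KM_relsub_def by (rule group.generate_subgroup_incl[OF group_KM_free _ h0.subgroup_kernel])
  obtain h where h: "h \<in> hom (KM K n) G"
    "\<And>x. x \<in> carrier (KM_free K n) \<Longrightarrow> h (KM_class K n x) = h0 x"
    unfolding KM_def
  proof (rule FactGroup_universal[OF h0(1) normal_KM_relsub])
    fix x y assume xy: "x \<in> carrier (KM_free K n)" "y \<in> carrier (KM_free K n)"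
      and "KM_class K n x = KM_class K n y"
    then have "y \<in> KM_class K n x"
      using group.rcos_self[OF group_KM_free xy(2) subgroup_KM_relsub] by simp
    then obtain r where r: "r \<in> KM_relsub K n" "y = r \<otimes>\<^bsub>KM_free K n\<^esub> x"
      unfolding r_coset_def by auto
    then have "r \<in> carrier (KM_free K n)" "h0 r = \<one>\<^bsub>G\<^esub>"
      using relsub unfolding kernel_def by auto
    then show "h0 x = h0 y" using r(2) xy h0.hom_mult[of r x] by simp
  qed blast
  show ?thesis
    using h symb_eq_KM_class h0(2) by (metis frag_of_in_KM_free)
qed

lemma symb_mult_entry:
  assumes gens: "xs @ [a] @ ys \<in> KM_gens K n" "xs @ [b] @ ys \<in> KM_gens K n"
    "xs @ [a \<otimes>\<^bsub>K\<^esub> b] @ ys \<in> KM_gens K n"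
  shows "symb K (xs @ [a \<otimes>\<^bsub>K\<^esub> b] @ ys) = symb K (xs @ [a] @ ys) \<otimes>\<^bsub>KM K n\<^esub> symb K (xs @ [b] @ ys)"
proof -
  interpret q: group_hom "KM_free K n" "KM K n" "KM_class K n" by (rule group_hom_KM_class)
  let ?A = "frag_of (xs @ [a] @ ys)" and ?B = "frag_of (xs @ [b] @ ys)"
    and ?C = "frag_of (xs @ [a \<otimes>\<^bsub>K\<^esub> b] @ ys)"
  have r: "?C - ?A - ?B \<in> KM_relsub K n"
    unfolding KM_relsub_def KM_rels_def using gens by (blast intro: generate.incl)
  then have "?C - ?A - ?B \<in> carrier (KM_free K n)"
    using subgroup.subset[OF subgroup_KM_relsub] by blast
  moreover have "?C = (?C - ?A - ?B) \<otimes>\<^bsub>KM_free K n\<^esub> ?A \<otimes>\<^bsub>KM_free K n\<^esub> ?B" by simp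
  ultimately have "KM_class K n ?C = KM_class K n (?C - ?A - ?B) \<otimes>\<^bsub>KM K n\<^esub> KM_class K n ?A \<otimes>\<^bsub>KM K n\<^esub> KM_class K n ?B"
    using gens by (metis q.hom_mult frag_of_in_KM_free group.is_monoid[OF group_KM_free] monoid.m_closed)
  then show ?thesis
    using gens r by (simp add: symb_eq_KM_class KM_class_relation symb_closed)
qed

lemma symb_steinberg:
  assumes "xs @ [a, b] @ ys \<in> KM_gens K n" "a \<oplus>\<^bsub>K\<^esub> b = \<one>\<^bsub>K\<^esub>"
  shows "symb K (xs @ [a, b] @ ys) = \<one>\<^bsub>KM K n\<^esub>"
proof -
  have "frag_of (xs @ [a, b] @ ys) \<in> KM_relsub K n"
    unfolding KM_relsub_def KM_rels_def using assms by (blast intro: generate.incl)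
  then show ?thesis using assms(1) by (simp add: symb_eq_KM_class KM_class_relation)
qed

lemma prod_sub_mono:
  "U \<subseteq> U' \<Longrightarrow> A \<subseteq> A' \<Longrightarrow> prod_sub K n U A \<subseteq> prod_sub K n U' A'"
  unfolding prod_sub_def by (rule group.mono_generate[OF group_KM]) blast

section \<open>Symbol identities over a field\<close>

context field
begin

lemma inv_nonzero:
  assumes "a \<in> carrier R" "a \<noteq> \<zero>"
  shows "inv a \<in> carrier R" "inv a \<noteq> \<zero>"
  using assms field_Units Units_inv_Units by blast+

lemma neg_nonzero:
  assumes "a \<in> carrier R" "a \<noteq> \<zero>"
  shows "\<ominus> a \<in> carrier R" "\<ominus> a \<noteq> \<zero>"
  using assms by (metis a_inv_closed minus_minus minus_zero)+

lemma symb_mult: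
  assumes "xs @ [a] @ ys \<in> KM_gens R n" "b \<in> carrier R" "b \<noteq> \<zero>"
  shows "symb R (xs @ [a \<otimes> b] @ ys) = symb R (xs @ [a] @ ys) \<otimes>\<^bsub>KM R n\<^esub> symb R (xs @ [b] @ ys)"
  by (rule symb_mult_entry) (use assms integral in \<open>auto simp: KM_gens_iff\<close>)

lemma symb_one_entry:
  assumes gen: "xs @ [\<one>] @ ys \<in> KM_gens R n"
  shows "symb R (xs @ [\<one>] @ ys) = \<one>\<^bsub>KM R n\<^esub>"
proof -
  interpret G: comm_group "KM R n" by (rule comm_group_KM)
  let ?s = "symb R (xs @ [\<one>] @ ys)"
  have "?s \<otimes>\<^bsub>KM R n\<^esub> ?s = ?s \<otimes>\<^bsub>KM R n\<^esub> \<one>\<^bsub>KM R n\<^esub>"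
    using symb_mult[OF gen, of \<one>] symb_closed[OF gen] by simp
  then show ?thesis using G.l_cancel symb_closed[OF gen] G.one_closed by metis
qed

lemma symb_inv_entry:
  assumes gen: "xs @ [a] @ ys \<in> KM_gens R n"
  shows "symb R (xs @ [inv a] @ ys) = inv\<^bsub>KM R n\<^esub> symb R (xs @ [a] @ ys)"
proof -
  interpret G: comm_group "KM R n" by (rule comm_group_KM)
  have a: "a \<in> carrier R" "a \<noteq> \<zero>" using gen by (auto simp: KM_gens_iff)
  then have ia: "inv a \<in> carrier R" "inv a \<noteq> \<zero>" "a \<otimes> inv a = \<one>"
    using inv_nonzero field_Units by auto
  have gens: "xs @ [inv a] @ ys \<in> KM_gens R n" "xs @ [\<one>] @ ys \<in> KM_gens R n"
    using gen ia by (auto simp: KM_gens_iff)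
  have "symb R (xs @ [a] @ ys) \<otimes>\<^bsub>KM R n\<^esub> symb R (xs @ [inv a] @ ys) = \<one>\<^bsub>KM R n\<^esub>"
    using symb_mult[OF gen ia(1,2)] symb_one_entry[OF gens(2)] ia(3) by simp
  then show ?thesis using G.inv_equality symb_closed[OF gen] symb_closed[OF gens(1)] G.m_comm by metis
qed

lemma symb_a_neg_a:
  assumes gen: "xs @ [a, \<ominus> a] @ ys \<in> KM_gens R n"
  shows "symb R (xs @ [a, \<ominus> a] @ ys) = \<one>\<^bsub>KM R n\<^esub>"
proof (cases "a = \<one>")
  case True
  then show ?thesis using symb_one_entry[of xs "\<ominus> \<one> # ys"] gen by simp
next
  case False
  interpret G: comm_group "KM R n" by (rule comm_group_KM)
  have a: "a \<in> carrier R" "a \<noteq> \<zero>" using gen by (auto simp: KM_gens_iff)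
  then have ia: "inv a \<in> carrier R" "inv a \<noteq> \<zero>" "a \<otimes> inv a = \<one>" "inv (inv a) = a"
    using inv_nonzero field_Units by auto
  have "inv a \<noteq> \<one>" using ia(3) False a(1) by auto
  then have c: "\<one> \<ominus> inv a \<in> carrier R" "\<one> \<ominus> inv a \<noteq> \<zero>"
    using ia(1) r_right_minus_eq by auto
  have b: "\<one> \<ominus> a \<in> carrier R" "\<one> \<ominus> a \<noteq> \<zero>"
    using a(1) False r_right_minus_eq by auto
  \<comment> \<open>\<open>-a = (1 - a) / (1 - a\<inverse>)\<close>, and \<open>{a, 1 - a} = {a\<inverse>, 1 - a\<inverse>} = 1\<close>\<close>
  have "\<ominus> a \<otimes> (\<one> \<ominus> inv a) = \<ominus> a \<oplus> a \<otimes> inv a"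
    using a(1) ia(1) by algebra
  then have "\<ominus> a \<otimes> (\<one> \<ominus> inv a) = \<one> \<ominus> a"
    using a(1) ia(3) by (simp add: minus_eq a_comm)
  then have neg_a: "\<ominus> a = (\<one> \<ominus> a) \<otimes> inv (\<one> \<ominus> inv a)"
    using a(1) c field_Units by (metis Diff_iff Units_inv_closed Units_r_inv a_inv_closed empty_iff
        insert_iff m_assoc r_one)
  let ?gen = "\<lambda>zs. (xs @ [a]) @ zs @ ys \<in> KM_gens R n"
  have gens: "?gen [\<one> \<ominus> a]" "?gen [\<one> \<ominus> inv a]" "xs @ [inv a, \<one> \<ominus> inv a] @ ys \<in> KM_gens R n"
    using gen b c ia by (auto simp: KM_gens_iff)
  have "symb R (xs @ [a, \<ominus> a] @ ys)
      = symb R (xs @ [a, \<one> \<ominus> a] @ ys) \<otimes>\<^bsub>KM R n\<^esub> inv\<^bsub>KM R n\<^esub> symb R (xs @ [a, \<one> \<ominus> inv a] @ ys)"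
    using symb_mult[OF gens(1), of "inv (\<one> \<ominus> inv a)"] symb_inv_entry[OF gens(2)] inv_nonzero[OF c] neg_a
    by simp
  also have "symb R (xs @ [a, \<one> \<ominus> a] @ ys) = \<one>\<^bsub>KM R n\<^esub>"
    by (rule symb_steinberg) (use gens(1) a(1) in \<open>simp_all, algebra\<close>)
  also have "symb R (xs @ [a, \<one> \<ominus> inv a] @ ys) = \<one>\<^bsub>KM R n\<^esub>"
  proof -
    have "symb R (xs @ [inv a, \<one> \<ominus> inv a] @ ys) = \<one>\<^bsub>KM R n\<^esub>"
      by (rule symb_steinberg[OF gens(3)]) (use ia(1) in algebra)
    then show ?thesis
      using symb_inv_entry[of xs "inv a" "(\<one> \<ominus> inv a) # ys"] gens(3) ia(4) by simp
  qed
  finally show ?thesis by simp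
qed

lemma symb_anticomm:
  assumes gen: "xs @ [a, b] @ ys \<in> KM_gens R n"
  shows "symb R (xs @ [a, b] @ ys) \<otimes>\<^bsub>KM R n\<^esub> symb R (xs @ [b, a] @ ys) = \<one>\<^bsub>KM R n\<^esub>"
proof -
  interpret G: comm_group "KM R n" by (rule comm_group_KM)
  have a: "a \<in> carrier R" "a \<noteq> \<zero>" and b: "b \<in> carrier R" "b \<noteq> \<zero>"
    using gen by (auto simp: KM_gens_iff)
  then have ab: "a \<otimes> b \<in> carrier R" "a \<otimes> b \<noteq> \<zero>" using integral by auto
  let ?c = "\<ominus> (a \<otimes> b)"
  have c: "?c = \<ominus> a \<otimes> b" "?c = a \<otimes> \<ominus> b" using a b by (simp_all add: l_minus r_minus)
  have gens: "xs @ [a \<otimes> b, ?c] @ ys \<in> KM_gens R n" "xs @ [a] @ ?c # ys \<in> KM_gens R n"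
    "(xs @ [a]) @ [\<ominus> a] @ ys \<in> KM_gens R n" "(xs @ [b]) @ [a] @ ys \<in> KM_gens R n"
    "xs @ [a, \<ominus> a] @ ys \<in> KM_gens R n" "xs @ [b, \<ominus> b] @ ys \<in> KM_gens R n"
    using gen neg_nonzero[OF a] neg_nonzero[OF b] neg_nonzero[OF ab] by (auto simp: KM_gens_iff)
  have "\<one>\<^bsub>KM R n\<^esub> = symb R (xs @ [a \<otimes> b, ?c] @ ys)"
    using symb_a_neg_a[OF gens(1)] by simp
  also have "\<dots> = symb R (xs @ [a, ?c] @ ys) \<otimes>\<^bsub>KM R n\<^esub> symb R (xs @ [b, ?c] @ ys)"
    using symb_mult[OF gens(2) b] by simp
  also have "symb R (xs @ [a, ?c] @ ys) = symb R (xs @ [a, b] @ ys)"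
    using symb_mult[OF gens(3) b] symb_a_neg_a[OF gens(5)] symb_closed[OF gen] c(1) by simp
  also have "symb R (xs @ [b, ?c] @ ys) = symb R (xs @ [b, a] @ ys)"
    using symb_mult[OF gens(4) neg_nonzero[OF b]] symb_a_neg_a[OF gens(6)] symb_closed[OF gens(4)] c(2)
    by simp
  finally show ?thesis by simp
qed

lemma symb_neg_one_square:
  assumes gen: "xs @ [\<ominus> \<one>] @ ys \<in> KM_gens R n"
  shows "symb R (xs @ [\<ominus> \<one>] @ ys) \<otimes>\<^bsub>KM R n\<^esub> symb R (xs @ [\<ominus> \<one>] @ ys) = \<one>\<^bsub>KM R n\<^esub>"
proof -
  have "\<ominus> \<one> \<otimes> \<ominus> \<one> = \<one>" by algebra
  moreover have "xs @ [\<one>] @ ys \<in> KM_gens R n" using gen by (auto simp: KM_gens_iff)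
  ultimately show ?thesis
    using symb_mult[OF gen, of "\<ominus> \<one>"] neg_nonzero[of \<one>] symb_one_entry by simp
qed

lemma symb_a_a:
  assumes gen: "xs @ [a, a] @ ys \<in> KM_gens R n"
  shows "symb R (xs @ [a, a] @ ys) = symb R (xs @ [a, \<ominus> \<one>] @ ys)"
proof -
  interpret G: comm_group "KM R n" by (rule comm_group_KM)
  have a: "a \<in> carrier R" "a \<noteq> \<zero>" using gen by (auto simp: KM_gens_iff)
  let ?s = "symb R (xs @ [a, \<ominus> \<one>] @ ys)"
  have gens: "(xs @ [a]) @ [\<ominus> \<one>] @ ys \<in> KM_gens R n" "xs @ [a, \<ominus> a] @ ys \<in> KM_gens R n"
    using gen neg_nonzero[of \<one>] neg_nonzero[OF a] by (auto simp: KM_gens_iff)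
  have "\<ominus> a = \<ominus> \<one> \<otimes> a" using a by (simp add: l_minus)
  then have "\<one>\<^bsub>KM R n\<^esub> = ?s \<otimes>\<^bsub>KM R n\<^esub> symb R (xs @ [a, a] @ ys)"
    using symb_mult[OF gens(1) a] symb_a_neg_a[OF gens(2)] by simp
  moreover have c: "?s \<in> carrier (KM R n)" "symb R (xs @ [a, a] @ ys) \<in> carrier (KM R n)"
    using symb_closed gen gens(1) by simp_all
  ultimately have "symb R (xs @ [a, a] @ ys) \<otimes>\<^bsub>KM R n\<^esub> ?s = \<one>\<^bsub>KM R n\<^esub>"
    using G.m_comm by simp
  then have "symb R (xs @ [a, a] @ ys) = inv\<^bsub>KM R n\<^esub> ?s"
    using G.inv_equality[OF _ c] by simp
  also have "\<dots> = ?s"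
    using G.inv_equality[OF symb_neg_one_square[OF gens(1)]] c(1) by simp
  finally show ?thesis .
qed

lemma lmul_hom_symb:
  assumes u: "u \<in> carrier R" "u \<noteq> \<zero>"
  shows "lmul R n u \<in> hom (KM R n) (KM R (Suc n)) \<and>
    (\<forall>us\<in>KM_gens R n. lmul R n u (symb R us) = symb R (u # us))"
proof -
  have gens: "(u # xs) \<in> KM_gens R (Suc n) \<longleftrightarrow> xs \<in> KM_gens R n" for xs
    using u by (auto simp: KM_gens_iff)
  have "\<exists>h\<in>hom (KM R n) (KM R (Suc n)). \<forall>us\<in>KM_gens R n. h (symb R us) = symb R (u # us)"
  proof (rule KM_universal[OF comm_group_KM])
    fix us assume "us \<in> KM_gens R n"
    then show "symb R (u # us) \<in> carrier (KM R (Suc n))" by (simp add: gens symb_closed)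
  next
    fix xs a b ys
    assume "xs @ [a] @ ys \<in> KM_gens R n" "xs @ [b] @ ys \<in> KM_gens R n" "xs @ [a \<otimes> b] @ ys \<in> KM_gens R n"
    then show "symb R (u # xs @ [a \<otimes> b] @ ys) = symb R (u # xs @ [a] @ ys) \<otimes>\<^bsub>KM R (Suc n)\<^esub> symb R (u # xs @ [b] @ ys)"
      using symb_mult_entry[of "u # xs" a ys R "Suc n" b] gens by simp
  next
    fix xs a b ys
    assume "xs @ [a, b] @ ys \<in> KM_gens R n" "a \<oplus> b = \<one>"
    then show "symb R (u # xs @ [a, b] @ ys) = \<one>\<^bsub>KM R (Suc n)\<^esub>"
      using symb_steinberg[of "u # xs" a b ys R "Suc n"] gens by simp
  qed
  then have "\<exists>h. h \<in> hom (KM R n) (KM R (Suc n)) \<and> (\<forall>us\<in>KM_gens R n. h (symb R us) = symb R (u # us))"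
    by blast
  then show ?thesis unfolding lmul_def by (rule someI_ex)
qed

lemma lmul_hom: "u \<in> carrier R \<Longrightarrow> u \<noteq> \<zero> \<Longrightarrow> lmul R n u \<in> hom (KM R n) (KM R (Suc n))"
  using lmul_hom_symb by blast

lemma lmul_symb:
  "u \<in> carrier R \<Longrightarrow> u \<noteq> \<zero> \<Longrightarrow> us \<in> KM_gens R n \<Longrightarrow> lmul R n u (symb R us) = symb R (u # us)"
  using lmul_hom_symb by blast

lemma group_hom_lmul: "u \<in> carrier R \<Longrightarrow> u \<noteq> \<zero> \<Longrightarrow> group_hom (KM R n) (KM R (Suc n)) (lmul R n u)"
  by (simp add: group_hom_def group_hom_axioms_def group_KM lmul_hom)

lemma lmul_closed:
  "u \<in> carrier R \<Longrightarrow> u \<noteq> \<zero> \<Longrightarrow> x \<in> carrier (KM R n) \<Longrightarrow> lmul R n u x \<in> carrier (KM R (Suc n))"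
  using hom_in_carrier[OF lmul_hom] by metis

lemma lmul_mult:
  assumes a: "a \<in> carrier R" "a \<noteq> \<zero>" and b: "b \<in> carrier R" "b \<noteq> \<zero>" and x: "x \<in> carrier (KM R n)"
  shows "lmul R n (a \<otimes> b) x = lmul R n a x \<otimes>\<^bsub>KM R (Suc n)\<^esub> lmul R n b x"
proof (rule KM_hom_eqI[OF group_KM _ _ _ x])
  have ab: "a \<otimes> b \<in> carrier R" "a \<otimes> b \<noteq> \<zero>" using a b integral by auto
  show "lmul R n (a \<otimes> b) \<in> hom (KM R n) (KM R (Suc n))" using lmul_hom[OF ab] .
  show "(\<lambda>x. lmul R n a x \<otimes>\<^bsub>KM R (Suc n)\<^esub> lmul R n b x) \<in> hom (KM R n) (KM R (Suc n))"
    using comm_group.hom_group_mult[OF comm_group_KM lmul_hom[OF a] lmul_hom[OF b]] .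
  fix us assume us: "us \<in> KM_gens R n"
  have gen: "[] @ [a] @ us \<in> KM_gens R (Suc n)" using us a by (auto simp: KM_gens_iff)
  show "lmul R n (a \<otimes> b) (symb R us) = lmul R n a (symb R us) \<otimes>\<^bsub>KM R (Suc n)\<^esub> lmul R n b (symb R us)"
    using lmul_symb[OF ab us] lmul_symb[OF a us] lmul_symb[OF b us] symb_mult[OF gen b] by simp
qed

lemma lmul_one:
  assumes x: "x \<in> carrier (KM R n)"
  shows "lmul R n \<one> x = \<one>\<^bsub>KM R (Suc n)\<^esub>"
proof (rule KM_hom_eqI[OF group_KM _ _ _ x])
  show "lmul R n \<one> \<in> hom (KM R n) (KM R (Suc n))" using lmul_hom[of \<one>] by simp
  show "(\<lambda>x. \<one>\<^bsub>KM R (Suc n)\<^esub>) \<in> hom (KM R n) (KM R (Suc n))" using trivial_hom[OF group_KM] .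
  fix us assume us: "us \<in> KM_gens R n"
  then have gen: "[] @ [\<one>] @ us \<in> KM_gens R (Suc n)" by (auto simp: KM_gens_iff)
  show "lmul R n \<one> (symb R us) = \<one>\<^bsub>KM R (Suc n)\<^esub>"
    using lmul_symb[of \<one> us n] us symb_one_entry[OF gen] by simp
qed

lemma lmul_lmul_trivial:
  assumes a: "a \<in> carrier R" "a \<noteq> \<zero>" and b: "b \<in> carrier R" "b \<noteq> \<zero>"
    and trivial: "\<And>us. us \<in> KM_gens R n \<Longrightarrow> symb R (a # b # us) = \<one>\<^bsub>KM R (Suc (Suc n))\<^esub>"
    and x: "x \<in> carrier (KM R n)"
  shows "lmul R (Suc n) a (lmul R n b x) = \<one>\<^bsub>KM R (Suc (Suc n))\<^esub>"
proof -
  have "(lmul R (Suc n) a \<circ> lmul R n b) x = (\<lambda>x. \<one>\<^bsub>KM R (Suc (Suc n))\<^esub>) x"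
  proof (rule KM_hom_eqI[OF group_KM _ _ _ x])
    show "lmul R (Suc n) a \<circ> lmul R n b \<in> hom (KM R n) (KM R (Suc (Suc n)))"
      using hom_compose[OF lmul_hom[OF b] lmul_hom[OF a]] .
    show "(\<lambda>x. \<one>\<^bsub>KM R (Suc (Suc n))\<^esub>) \<in> hom (KM R n) (KM R (Suc (Suc n)))"
      using trivial_hom[OF group_KM] .
    fix us assume us: "us \<in> KM_gens R n"
    then have "b # us \<in> KM_gens R (Suc n)" using b by (auto simp: KM_gens_iff)
    then show "(lmul R (Suc n) a \<circ> lmul R n b) (symb R us) = \<one>\<^bsub>KM R (Suc (Suc n))\<^esub>"
      using lmul_symb[OF b us] lmul_symb[OF a] trivial[OF us] by simp
  qed
  then show ?thesis by simp
qed

lemma lmul_steinberg: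
  assumes a: "a \<in> carrier R" "a \<noteq> \<zero>" and b: "b \<in> carrier R" "b \<noteq> \<zero>" and "a \<oplus> b = \<one>"
    and x: "x \<in> carrier (KM R n)"
  shows "lmul R (Suc n) a (lmul R n b x) = \<one>\<^bsub>KM R (Suc (Suc n))\<^esub>"
proof (rule lmul_lmul_trivial[OF a b _ x])
  fix us assume "us \<in> KM_gens R n"
  then have "[] @ [a, b] @ us \<in> KM_gens R (Suc (Suc n))" using a b by (auto simp: KM_gens_iff)
  with symb_steinberg[OF this \<open>a \<oplus> b = \<one>\<close>]
  show "symb R (a # b # us) = \<one>\<^bsub>KM R (Suc (Suc n))\<^esub>" by simp
qed

lemma lmul_a_neg_a:
  assumes a: "a \<in> carrier R" "a \<noteq> \<zero>" and x: "x \<in> carrier (KM R n)"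
  shows "lmul R (Suc n) a (lmul R n (\<ominus> a) x) = \<one>\<^bsub>KM R (Suc (Suc n))\<^esub>"
proof (rule lmul_lmul_trivial[OF a neg_nonzero[OF a] _ x])
  fix us assume "us \<in> KM_gens R n"
  then have "[] @ [a, \<ominus> a] @ us \<in> KM_gens R (Suc (Suc n))"
    using a neg_nonzero[OF a] by (auto simp: KM_gens_iff)
  with symb_a_neg_a[OF this] show "symb R (a # \<ominus> a # us) = \<one>\<^bsub>KM R (Suc (Suc n))\<^esub>" by simp
qed

lemma lmul_anticomm:
  assumes a: "a \<in> carrier R" "a \<noteq> \<zero>" and b: "b \<in> carrier R" "b \<noteq> \<zero>"
    and x: "x \<in> carrier (KM R n)"
  shows "lmul R (Suc n) a (lmul R n b x) \<otimes>\<^bsub>KM R (Suc (Suc n))\<^esub> lmul R (Suc n) b (lmul R n a x)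
    = \<one>\<^bsub>KM R (Suc (Suc n))\<^esub>"
proof -
  interpret G: comm_group "KM R (Suc (Suc n))" by (rule comm_group_KM)
  let ?f = "\<lambda>x. lmul R (Suc n) a (lmul R n b x) \<otimes>\<^bsub>KM R (Suc (Suc n))\<^esub> lmul R (Suc n) b (lmul R n a x)"
  have "?f x = (\<lambda>x. \<one>\<^bsub>KM R (Suc (Suc n))\<^esub>) x"
  proof (rule KM_hom_eqI[OF group_KM _ _ _ x])
    show "?f \<in> hom (KM R n) (KM R (Suc (Suc n)))"
      using G.hom_group_mult[OF hom_compose[OF lmul_hom[OF b] lmul_hom[OF a]]
          hom_compose[OF lmul_hom[OF a] lmul_hom[OF b]]] by (simp add: comp_def)
    show "(\<lambda>x. \<one>\<^bsub>KM R (Suc (Suc n))\<^esub>) \<in> hom (KM R n) (KM R (Suc (Suc n)))"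
      using trivial_hom[OF group_KM] .
    fix us assume us: "us \<in> KM_gens R n"
    then have gens: "[] @ [a, b] @ us \<in> KM_gens R (Suc (Suc n))" "b # us \<in> KM_gens R (Suc n)"
      "a # us \<in> KM_gens R (Suc n)" using a b by (auto simp: KM_gens_iff)
    then show "?f (symb R us) = \<one>\<^bsub>KM R (Suc (Suc n))\<^esub>"
      using lmul_symb[OF b us] lmul_symb[OF a us] lmul_symb[OF a] lmul_symb[OF b] symb_anticomm[OF gens(1)]
      by simp
  qed
  then show ?thesis by simp
qed

lemma lmul_neg_one_square:
  assumes x: "x \<in> carrier (KM R n)"
  shows "lmul R n (\<ominus> \<one>) x \<otimes>\<^bsub>KM R (Suc n)\<^esub> lmul R n (\<ominus> \<one>) x = \<one>\<^bsub>KM R (Suc n)\<^esub>"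
proof -
  have "\<ominus> \<one> \<otimes> \<ominus> \<one> = \<one>" by algebra
  then show ?thesis using lmul_mult[OF neg_nonzero[of \<one>] neg_nonzero[of \<one>] x] lmul_one[OF x] by simp
qed

lemma prod_sub_carrier_subset:
  assumes H: "subgroup H (KM R (Suc n))" and U: "U \<subseteq> carrier R - {\<zero>}"
    and gens: "\<And>u us. u \<in> U \<Longrightarrow> us \<in> KM_gens R n \<Longrightarrow> symb R (u # us) \<in> H"
  shows "prod_sub R n U (carrier (KM R n)) \<subseteq> H"
  unfolding prod_sub_def
proof (rule group.generate_subgroup_incl[OF group_KM _ H], clarify)
  interpret H: subgroup H "KM R (Suc n)" by (rule H)
  fix u a assume u: "u \<in> U" and a: "a \<in> carrier (KM R n)"
  then have "u \<in> carrier R" "u \<noteq> \<zero>" using U by auto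
  then interpret h: group_hom "KM R n" "KM R (Suc n)" "lmul R n u" by (rule group_hom_lmul)
  show "lmul R n u a \<in> H"
    using a
  proof (induction a rule: KM_induct)
    case (symb us)
    then show ?case using gens[OF u] lmul_symb \<open>u \<in> carrier R\<close> \<open>u \<noteq> \<zero>\<close> by simp
  qed (simp_all add: H.m_closed H.m_inv_closed)
qed

end

lemma fieldR_simps [simp]:
  "carrier (fieldR :: 'a::field ring) = UNIV"
  "x \<otimes>\<^bsub>fieldR\<^esub> y = x * y"
  "x \<oplus>\<^bsub>fieldR\<^esub> y = x + y"
  "\<one>\<^bsub>fieldR\<^esub> = 1"
  "\<zero>\<^bsub>fieldR\<^esub> = 0"
  by (simp_all add: fieldR_def)

lemma fieldR_restrict_simps [simp]:
  "carrier (fieldR\<lparr>carrier := S\<rparr>) = S"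
  "x \<otimes>\<^bsub>fieldR\<lparr>carrier := S\<rparr>\<^esub> y = x * y"
  "x \<oplus>\<^bsub>fieldR\<lparr>carrier := S\<rparr>\<^esub> y = x + y"
  "\<one>\<^bsub>fieldR\<lparr>carrier := S\<rparr>\<^esub> = 1"
  "\<zero>\<^bsub>fieldR\<lparr>carrier := S\<rparr>\<^esub> = 0"
  by (simp_all add: fieldR_def)

lemma cring_fieldR: "cring (fieldR :: 'a::field ring)"
proof (rule cringI)
  show "abelian_group (fieldR :: 'a ring)"
    by (rule abelian_groupI) (auto simp: algebra_simps intro: exI[of _ "- _"])
  show "comm_monoid (fieldR :: 'a ring)"
    by (rule comm_monoidI) (auto simp: algebra_simps)
qed (simp add: algebra_simps)

lemma field_fieldR: "field (fieldR :: 'a::field ring)"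
proof -
  interpret cring "fieldR :: 'a ring" by (rule cring_fieldR)
  show ?thesis
  proof (rule cring_fieldI2)
    fix a :: 'a assume "a \<in> carrier fieldR" "a \<noteq> \<zero>\<^bsub>fieldR\<^esub>"
    then show "\<exists>b\<in>carrier fieldR. a \<otimes>\<^bsub>fieldR\<^esub> b = \<one>\<^bsub>fieldR\<^esub>"
      by (auto intro!: exI[of _ "inverse a"])
  qed simp
qed

lemma fieldR_a_inv [simp]: "\<ominus>\<^bsub>(fieldR :: 'a::field ring)\<^esub> x = - x"
proof -
  interpret cring "fieldR :: 'a ring" by (rule cring_fieldR)
  show ?thesis by (rule minus_equality) auto
qed

lemma fieldR_m_inv: "(x::'a::field) \<noteq> 0 \<Longrightarrow> inv\<^bsub>fieldR\<^esub> x = inverse x"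
  using monoid.inv_char[OF ring.is_monoid[OF field.is_ring[OF field_fieldR]], of x "inverse x"] by simp

context
  fixes S :: "'a::field set"
  assumes zero: "0 \<in> S" and one: "1 \<in> S"
    and add: "\<And>x y. x \<in> S \<Longrightarrow> y \<in> S \<Longrightarrow> x + y \<in> S"
    and mult: "\<And>x y. x \<in> S \<Longrightarrow> y \<in> S \<Longrightarrow> x * y \<in> S"
    and uminus: "\<And>x. x \<in> S \<Longrightarrow> - x \<in> S"
begin

lemma cring_fieldR_restrict: "cring (fieldR\<lparr>carrier := S\<rparr>)"
proof (rule cringI)
  show "abelian_group (fieldR\<lparr>carrier := S\<rparr>)"
    by (rule abelian_groupI) (auto simp: zero add uminus algebra_simps intro!: bexI[of _ "- _"])
  show "comm_monoid (fieldR\<lparr>carrier := S\<rparr>)"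
    by (rule comm_monoidI) (auto simp: one mult algebra_simps)
qed (simp add: algebra_simps)

lemma fieldR_restrict_a_inv: "x \<in> S \<Longrightarrow> \<ominus>\<^bsub>fieldR\<lparr>carrier := S\<rparr>\<^esub> x = - x"
proof -
  interpret cring "fieldR\<lparr>carrier := S\<rparr>" by (rule cring_fieldR_restrict)
  show "x \<in> S \<Longrightarrow> ?thesis" by (rule minus_equality) (auto simp: uminus)
qed

end

lemma fieldR_KM_gens_iff: "xs \<in> KM_gens (fieldR :: 'a::field ring) n \<longleftrightarrow> length xs = n \<and> (\<forall>x\<in>set xs. x \<noteq> 0)"
  by (auto simp: KM_gens_iff)

lemma fieldR_symb_closed:
  "\<forall>x\<in>set xs. (x::'a::field) \<noteq> 0 \<Longrightarrow> length xs = n \<Longrightarrow> symb fieldR xs \<in> carrier (KM fieldR n)"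
  by (simp add: symb_closed fieldR_KM_gens_iff)

context
  fixes xs ys :: "'a::field list"
  assumes xs: "\<forall>x\<in>set xs. x \<noteq> 0" and ys: "\<forall>y\<in>set ys. y \<noteq> 0"
begin

lemma fieldR_symb_mult:
  "a \<noteq> 0 \<Longrightarrow> b \<noteq> 0 \<Longrightarrow> symb fieldR (xs @ [a * b] @ ys)
    = symb fieldR (xs @ [a] @ ys) \<otimes>\<^bsub>KM fieldR (Suc (length xs + length ys))\<^esub> symb fieldR (xs @ [b] @ ys)"
  using field.symb_mult[OF field_fieldR, of xs a ys _ b] xs ys by (simp add: fieldR_KM_gens_iff ball_Un)

lemma fieldR_symb_inverse:
  "a \<noteq> 0 \<Longrightarrow> symb fieldR (xs @ [inverse a] @ ys)
    = inv\<^bsub>KM fieldR (Suc (length xs + length ys))\<^esub> symb fieldR (xs @ [a] @ ys)"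
  using field.symb_inv_entry[OF field_fieldR, of xs a ys] xs ys
  by (simp add: fieldR_KM_gens_iff ball_Un fieldR_m_inv)

lemma fieldR_symb_power:
  assumes a: "a \<noteq> 0"
  shows "symb fieldR (xs @ [a ^ k] @ ys) = symb fieldR (xs @ [a] @ ys) [^]\<^bsub>KM fieldR (Suc (length xs + length ys))\<^esub> k"
proof (induction k)
  case 0
  then show ?case
    using field.symb_one_entry[OF field_fieldR, of xs ys] xs ys by (simp add: fieldR_KM_gens_iff ball_Un)
next
  case (Suc k)
  interpret G: comm_group "KM fieldR (Suc (length xs + length ys))" by (rule comm_group_KM)
  have c: "symb fieldR (xs @ [a] @ ys) \<in> carrier (KM fieldR (Suc (length xs + length ys)))"
    by (rule fieldR_symb_closed) (use xs ys a in auto)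
  then show ?case
    using Suc fieldR_symb_mult[OF a, of "a ^ k"] a G.m_comm[OF c G.nat_pow_closed[OF c]] by simp
qed

lemma fieldR_symb_powi:
  assumes a: "a \<noteq> 0"
  shows "symb fieldR (xs @ [a powi k] @ ys) = symb fieldR (xs @ [a] @ ys) [^]\<^bsub>KM fieldR (Suc (length xs + length ys))\<^esub> k"
proof -
  interpret G: comm_group "KM fieldR (Suc (length xs + length ys))" by (rule comm_group_KM)
  have c: "symb fieldR (xs @ [a] @ ys) \<in> carrier (KM fieldR (Suc (length xs + length ys)))"
    by (rule fieldR_symb_closed) (use xs ys a in auto)
  show ?thesis
  proof (cases "k \<ge> 0")
    case True
    then obtain n where "k = int n" using nonneg_eq_int by blast
    then show ?thesis using fieldR_symb_power[OF a, of n] by (simp add: int_pow_int)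
  next
    case False
    then obtain n where n: "k = - int n" by (metis neg_0_le_iff_le nonneg_eq_int minus_minus nle_le)
    then have "a powi k = inverse (a ^ n)" by (simp add: power_int_minus)
    then show ?thesis
      using fieldR_symb_inverse[of "a ^ n"] fieldR_symb_power[OF a, of n] a n G.int_pow_neg_int[OF c] by simp
  qed
qed

lemma fieldR_symb_steinberg:
  "a \<noteq> 0 \<Longrightarrow> b \<noteq> 0 \<Longrightarrow> a + b = 1 \<Longrightarrow>
    symb fieldR (xs @ [a, b] @ ys) = \<one>\<^bsub>KM fieldR (Suc (Suc (length xs + length ys)))\<^esub>"
  using symb_steinberg[of xs a b ys fieldR] xs ys by (simp add: fieldR_KM_gens_iff ball_Un)

lemma fieldR_symb_swap:
  assumes "a \<noteq> 0" "b \<noteq> 0"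
  shows "symb fieldR (xs @ [a, b] @ ys) = inv\<^bsub>KM fieldR (Suc (Suc (length xs + length ys)))\<^esub> symb fieldR (xs @ [b, a] @ ys)"
proof -
  interpret G: comm_group "KM fieldR (Suc (Suc (length xs + length ys)))" by (rule comm_group_KM)
  have gens: "xs @ [a, b] @ ys \<in> KM_gens fieldR (Suc (Suc (length xs + length ys)))"
    "xs @ [b, a] @ ys \<in> KM_gens fieldR (Suc (Suc (length xs + length ys)))"
    using assms xs ys by (auto simp: fieldR_KM_gens_iff)
  show ?thesis
    using field.symb_anticomm[OF field_fieldR gens(1)] symb_closed[OF gens(1)] symb_closed[OF gens(2)]
    by (simp add: G.inv_equality)
qed

lemma fieldR_symb_a_a:
  "a \<noteq> 0 \<Longrightarrow> symb fieldR (xs @ [a, a] @ ys) = symb fieldR (xs @ [a, -1] @ ys)"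
  using field.symb_a_a[OF field_fieldR, of xs a ys] xs ys by (simp add: fieldR_KM_gens_iff ball_Un)

end

lemma fieldR_lmul_symb:
  "(u::'a::field) \<noteq> 0 \<Longrightarrow> \<forall>x\<in>set us. x \<noteq> 0 \<Longrightarrow> length us = n \<Longrightarrow>
    lmul fieldR n u (symb fieldR us) = symb fieldR (u # us)"
  using field.lmul_symb[OF field_fieldR, of u us n] by (simp add: fieldR_KM_gens_iff ball_Un)

lemma fieldR_group_hom_lmul: "(u::'a::field) \<noteq> 0 \<Longrightarrow> group_hom (KM fieldR n) (KM fieldR (Suc n)) (lmul fieldR n u)"
  using field.group_hom_lmul[OF field_fieldR] by simp

context comm_group
begin

text \<open>The recursion step of \<open>tame_list\<close> below is additive in the exponent and in its factors.\<close>

lemma int_pow_add_mult_inv: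
  assumes "S \<in> carrier G" "M \<in> carrier G" "A \<in> carrier G" "B \<in> carrier G"
  shows "S [^] (i + j :: int) \<otimes> M [^] (i + j) \<otimes> inv (A \<otimes> B)
       = (S [^] i \<otimes> M [^] i \<otimes> inv A) \<otimes> (S [^] j \<otimes> M [^] j \<otimes> inv B)"
  using assms by (simp add: int_pow_mult inv_mult m_ac)

lemma int_pow_mult_inv_distrib:
  assumes "S \<in> carrier G" "S' \<in> carrier G" "M \<in> carrier G" "M' \<in> carrier G" "A \<in> carrier G" "A' \<in> carrier G"
  shows "(S \<otimes> S') [^] (i :: int) \<otimes> (M \<otimes> M') [^] i \<otimes> inv (A \<otimes> A')
       = (S [^] i \<otimes> M [^] i \<otimes> inv A) \<otimes> (S' [^] i \<otimes> M' [^] i \<otimes> inv A')"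
  using assms by (simp add: int_pow_distrib inv_mult m_ac)

text \<open>The cancellation behind the Steinberg relation for \<open>tame_list\<close> when both entries have
  the same negative valuation \<open>e\<close>; it works because \<open>e (e + 1)\<close> is even.\<close>

lemma int_pow_cancel_square_one:
  assumes c: "p \<in> carrier G" "q \<in> carrier G" "r \<in> carrier G" "s \<in> carrier G" "t \<in> carrier G"
    and pp: "p \<otimes> p = \<one>" and rr: "r \<otimes> r = \<one>" and st: "s \<otimes> t = \<one>"
  shows "(p \<otimes> q) [^] (e::int) \<otimes> (p [^] e \<otimes> r [^] e \<otimes> inv (r \<otimes> s)) [^] e \<otimes> inv (q [^] e \<otimes> t [^] e \<otimes> inv \<one>)
    = \<one>"
proof -
  have square_one_pow: "x [^] (e + e * e) = \<one>" if "x \<in> carrier G" "x \<otimes> x = \<one>" for x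
  proof -
    obtain k where "e + e * e = 2 * k" by (metis even_mult_iff even_add dvdE)
    moreover have "x [^] (2 * k) = (x \<otimes> x) [^] k"
      using that(1) int_pow_pow[OF that(1), of 2 k] int_pow_mult[OF that(1), of 1 1] by simp
    ultimately show ?thesis using that(2) by simp
  qed
  have "inv r = r" "inv s = t" using c rr st by (simp_all add: inv_equality m_comm)
  then have "inv (r \<otimes> s) = r \<otimes> t" using c by (simp add: inv_mult)
  then have "(p \<otimes> q) [^] e \<otimes> (p [^] e \<otimes> r [^] e \<otimes> inv (r \<otimes> s)) [^] e \<otimes> inv (q [^] e \<otimes> t [^] e \<otimes> inv \<one>)
      = (p [^] e \<otimes> q [^] e) \<otimes> ((p [^] e) [^] e \<otimes> (r [^] e) [^] e \<otimes> (r [^] e \<otimes> t [^] e))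
        \<otimes> (inv (q [^] e) \<otimes> inv (t [^] e))"
    using c by (simp add: int_pow_distrib inv_mult)
  also have "\<dots> = (p [^] e \<otimes> p [^] (e * e)) \<otimes> (r [^] (e * e) \<otimes> r [^] e)
      \<otimes> (q [^] e \<otimes> inv (q [^] e)) \<otimes> (t [^] e \<otimes> inv (t [^] e))"
    using c by (simp only: int_pow_pow m_ac int_pow_closed inv_closed m_closed)
  also have "\<dots> = p [^] (e + e * e) \<otimes> r [^] (e * e + e)"
    using c by (simp add: int_pow_mult)
  finally show ?thesis using square_one_pow c pp rr by (simp add: add.commute)
qed

end

section \<open>Discrete valuations\<close>

locale dvr =
  fixes v :: "'a::field \<Rightarrow> int"
  assumes discrete_valuation: "discrete_valuation v"
begin

lemma v_mult: "x \<noteq> 0 \<Longrightarrow> y \<noteq> 0 \<Longrightarrow> v (x * y) = v x + v y"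
  using discrete_valuation unfolding discrete_valuation_def by blast

lemma v_add: "x \<noteq> 0 \<Longrightarrow> y \<noteq> 0 \<Longrightarrow> x + y \<noteq> 0 \<Longrightarrow> v (x + y) \<ge> min (v x) (v y)"
  using discrete_valuation unfolding discrete_valuation_def by blast

lemma v_one [simp]: "v 1 = 0"
  using v_mult[of 1 1] by simp

lemma v_minus_one [simp]: "v (- 1) = 0"
  using v_mult[of "- 1" "- 1"] by simp

lemma v_uminus [simp]: "x \<noteq> 0 \<Longrightarrow> v (- x) = v x"
  using v_mult[of "- 1" x] by simp

lemma v_inverse: "x \<noteq> 0 \<Longrightarrow> v (inverse x) = - v x"
  using v_mult[of x "inverse x"] by simp

lemma v_divide: "x \<noteq> 0 \<Longrightarrow> y \<noteq> 0 \<Longrightarrow> v (x / y) = v x - v y"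
  by (simp add: divide_inverse v_mult v_inverse)

lemma v_add_less:
  assumes "x \<noteq> 0" "y \<noteq> 0" "v x < v y"
  shows "x + y \<noteq> 0" "v (x + y) = v x"
proof -
  show s: "x + y \<noteq> 0"
  proof
    assume "x + y = 0"
    then have "y = - x" by (simp add: eq_neg_iff_add_eq_0 add.commute)
    then show False using assms by simp
  qed
  have "v (x + y) \<ge> v x" using v_add[OF assms(1,2) s] assms(3) by simp
  moreover have "v x \<ge> min (v (x + y)) (v (- y))"
    using v_add[OF s, of "- y"] assms by simp
  ultimately show "v (x + y) = v x" using assms by auto
qed

definition \<pi> :: 'a where "\<pi> = (SOME p. p \<noteq> 0 \<and> v p = 1)"

lemma uniformizer: "\<pi> \<noteq> 0" "v \<pi> = 1"
proof -
  have "\<exists>p. p \<noteq> 0 \<and> v p = 1" using discrete_valuation unfolding discrete_valuation_def by blast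
  from someI_ex[OF this] show "\<pi> \<noteq> 0" "v \<pi> = 1" unfolding \<pi>_def by auto
qed

lemma v_power: "x \<noteq> 0 \<Longrightarrow> v (x ^ n) = int n * v x"
  by (induction n) (auto simp: v_mult algebra_simps)

lemma v_power_int: "x \<noteq> 0 \<Longrightarrow> v (x powi k) = k * v x"
  by (cases "k \<ge> 0")
    (auto simp: power_int_def v_power v_inverse power_inverse[symmetric] simp del: power_inverse)

definition unit_part :: "'a \<Rightarrow> 'a" where "unit_part x = x / \<pi> powi (v x)"

lemma unit_part_nonzero: "x \<noteq> 0 \<Longrightarrow> unit_part x \<noteq> 0"
  unfolding unit_part_def using uniformizer by simp

lemma v_unit_part: "x \<noteq> 0 \<Longrightarrow> v (unit_part x) = 0"
  unfolding unit_part_def using uniformizer by (simp add: v_divide v_power_int)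

lemma unit_part_decomp: "x = \<pi> powi (v x) * unit_part x"
  unfolding unit_part_def using uniformizer by simp

lemma unit_part_mult: "x \<noteq> 0 \<Longrightarrow> y \<noteq> 0 \<Longrightarrow> unit_part (x * y) = unit_part x * unit_part y"
  unfolding unit_part_def using uniformizer by (simp add: v_mult power_int_add)

lemma unit_part_unit: "v x = 0 \<Longrightarrow> unit_part x = x"
  unfolding unit_part_def by simp

lemma val_ring_add: "x \<in> val_ring v \<Longrightarrow> y \<in> val_ring v \<Longrightarrow> x + y \<in> val_ring v"
  using v_add[of x y] by (cases "x = 0 \<or> y = 0 \<or> x + y = 0") (auto simp: val_ring_def)

lemma val_ring_mult: "x \<in> val_ring v \<Longrightarrow> y \<in> val_ring v \<Longrightarrow> x * y \<in> val_ring v"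
  by (auto simp: val_ring_def v_mult)

lemma val_ring_uminus: "x \<in> val_ring v \<Longrightarrow> - x \<in> val_ring v"
  by (cases "x = 0") (auto simp: val_ring_def)

lemma val_ring_zero: "0 \<in> val_ring v" and val_ring_one: "1 \<in> val_ring v"
  by (auto simp: val_ring_def)

lemma cring_valR: "cring (valR v)"
  unfolding valR_def
  by (rule cring_fieldR_restrict[OF val_ring_zero val_ring_one val_ring_add val_ring_mult val_ring_uminus])

lemma valR_simps [simp]:
  "carrier (valR v) = val_ring v"
  "x \<otimes>\<^bsub>valR v\<^esub> y = x * y"
  "x \<oplus>\<^bsub>valR v\<^esub> y = x + y"
  "\<one>\<^bsub>valR v\<^esub> = 1"
  "\<zero>\<^bsub>valR v\<^esub> = 0"
  by (simp_all add: valR_def)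

lemma valR_a_inv: "x \<in> val_ring v \<Longrightarrow> \<ominus>\<^bsub>valR v\<^esub> x = - x"
  unfolding valR_def
  by (rule fieldR_restrict_a_inv[OF val_ring_zero val_ring_one val_ring_add val_ring_mult val_ring_uminus])

lemma mpow_subset_val_ring: "mpow v k \<subseteq> val_ring v"
  by (auto simp: mpow_def val_ring_def)

lemma mpow_antimono: "k \<le> l \<Longrightarrow> mpow v l \<subseteq> mpow v k"
  by (auto simp: mpow_def)

lemma ideal_mpow_one: "ideal (mpow v 1) (valR v)"
proof -
  interpret R: cring "valR v" by (rule cring_valR)
  show ?thesis
  proof (rule idealI[OF R.ring_axioms])
    show "subgroup (mpow v 1) (add_monoid (valR v))"
      apply (rule R.add.subgroupI)
      subgoal using mpow_subset_val_ring by simp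
      subgoal by (auto simp: mpow_def)
      subgoal for a
        using valR_a_inv[of a] by (cases "a = 0") (auto simp: a_inv_def mpow_def val_ring_def)
      subgoal for a b
        using v_add[of a b] by (cases "a = 0 \<or> b = 0 \<or> a + b = 0") (auto simp: mpow_def)
      done
  qed (auto simp: mpow_def val_ring_def v_mult)
qed

lemma maximalideal_mpow_one: "maximalideal (mpow v 1) (valR v)"
proof (rule maximalidealI[OF ideal_mpow_one])
  show "carrier (valR v) \<noteq> mpow v 1" using val_ring_one by (auto simp: mpow_def)
next
  fix J assume J: "ideal J (valR v)" "mpow v 1 \<subseteq> J" "J \<subseteq> carrier (valR v)"
  interpret J: ideal J "valR v" by (rule J(1))
  show "J = mpow v 1 \<or> J = carrier (valR v)"
  proof (cases "J = mpow v 1")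
    case False
    then obtain x where x: "x \<in> J" "x \<notin> mpow v 1" using J(2) by blast
    then have "x \<noteq> 0" "v x = 0" using J(3) by (auto simp: mpow_def val_ring_def)
    then have "inverse x \<in> val_ring v" "inverse x * x = 1" by (auto simp: val_ring_def v_inverse)
    then have "1 \<in> J" using J.I_l_closed[OF x(1), of "inverse x"] by simp
    then have "carrier (valR v) \<subseteq> J" using J.I_l_closed by fastforce
    then show ?thesis using J(3) by blast
  qed simp
qed

sublocale \<kappa>: field "resfield v"
  unfolding resfield_def by (rule maximalideal.quotient_is_field[OF maximalideal_mpow_one cring_valR])

abbreviation \<kappa> :: "'a set ring" where "\<kappa> \<equiv> resfield v"

lemma ring_hom_ring_res: "ring_hom_ring (valR v) \<kappa> (res v)"
proof -
  have "res v = (+>\<^bsub>valR v\<^esub>) (mpow v 1)" unfolding res_def by (rule ext) simp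
  then show ?thesis unfolding resfield_def using ideal.rcos_ring_hom_ring[OF ideal_mpow_one] by simp
qed

interpretation res: ring_hom_ring "valR v" \<kappa> "res v" by (rule ring_hom_ring_res)

lemma res_mult: "x \<in> val_ring v \<Longrightarrow> y \<in> val_ring v \<Longrightarrow> res v (x * y) = res v x \<otimes>\<^bsub>\<kappa>\<^esub> res v y"
  using res.hom_mult[of x y] by simp

lemma res_add: "x \<in> val_ring v \<Longrightarrow> y \<in> val_ring v \<Longrightarrow> res v (x + y) = res v x \<oplus>\<^bsub>\<kappa>\<^esub> res v y"
  using res.hom_add[of x y] by simp

lemma res_one: "res v 1 = \<one>\<^bsub>\<kappa>\<^esub>"
  using res.hom_one by simp

lemma res_uminus: "x \<in> val_ring v \<Longrightarrow> res v (- x) = \<ominus>\<^bsub>\<kappa>\<^esub> res v x"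
  using res.hom_a_inv[of x] valR_a_inv[of x] by simp

lemma res_closed: "x \<in> val_ring v \<Longrightarrow> res v x \<in> carrier \<kappa>"
  using res.hom_closed[of x] by simp

lemma res_eq_zero_iff: "x \<in> val_ring v \<Longrightarrow> res v x = \<zero>\<^bsub>\<kappa>\<^esub> \<longleftrightarrow> x \<in> mpow v 1"
proof -
  interpret I: ideal "mpow v 1" "valR v" by (rule ideal_mpow_one)
  have zero: "\<zero>\<^bsub>\<kappa>\<^esub> = mpow v 1" unfolding resfield_def by (simp add: FactRing_def)
  assume x: "x \<in> val_ring v"
  then have "x \<in> res v x" using I.a_rcos_self unfolding res_def by simp
  then show ?thesis using I.a_rcos_const zero unfolding res_def by auto
qed

lemma res_unit:
  assumes "x \<noteq> 0" "v x = 0"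
  shows "res v x \<in> carrier \<kappa>" "res v x \<noteq> \<zero>\<^bsub>\<kappa>\<^esub>"
  using assms res_closed[of x] res_eq_zero_iff[of x] by (auto simp: val_ring_def mpow_def)

definition ac :: "'a \<Rightarrow> 'a set" where "ac x = res v (unit_part x)"

lemma ac_nonzero:
  assumes "x \<noteq> 0"
  shows "ac x \<in> carrier \<kappa>" "ac x \<noteq> \<zero>\<^bsub>\<kappa>\<^esub>"
  unfolding ac_def using res_unit[OF unit_part_nonzero v_unit_part] assms by auto

lemma unit_part_in_val_ring: "x \<noteq> 0 \<Longrightarrow> unit_part x \<in> val_ring v"
  using v_unit_part by (simp add: val_ring_def)

lemma ac_mult: "x \<noteq> 0 \<Longrightarrow> y \<noteq> 0 \<Longrightarrow> ac (x * y) = ac x \<otimes>\<^bsub>\<kappa>\<^esub> ac y"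
  unfolding ac_def by (simp add: unit_part_mult res_mult unit_part_in_val_ring)

lemma ac_unit: "v x = 0 \<Longrightarrow> ac x = res v x"
  unfolding ac_def by (simp add: unit_part_unit)

lemma one_plus_pos_val:
  assumes "x \<noteq> 0" "v x > 0"
  shows "1 + x \<noteq> 0" "v (1 + x) = 0" "ac (1 + x) = \<one>\<^bsub>\<kappa>\<^esub>"
proof -
  show "1 + x \<noteq> 0" "v (1 + x) = 0" using v_add_less[of 1 x] assms by auto
  moreover have "x \<in> val_ring v" "res v x = \<zero>\<^bsub>\<kappa>\<^esub>"
    using assms res_eq_zero_iff[of x] by (auto simp: val_ring_def mpow_def)
  ultimately show "ac (1 + x) = \<one>\<^bsub>\<kappa>\<^esub>"
    using res_add[of 1 x] res_one res_closed val_ring_one by (simp add: ac_unit)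
qed

lemma steinberg_val_cases:
  assumes a: "a \<noteq> 0" and b: "b \<noteq> 0" and ab: "a + b = 1"
  obtains "v a > 0" "v b = 0" "ac b = \<one>\<^bsub>\<kappa>\<^esub>"
    | "v b > 0" "v a = 0" "ac a = \<one>\<^bsub>\<kappa>\<^esub>"
    | "v a = 0" "v b = 0" "ac a \<oplus>\<^bsub>\<kappa>\<^esub> ac b = \<one>\<^bsub>\<kappa>\<^esub>"
    | "v a < 0" "v b = v a" "ac b = \<ominus>\<^bsub>\<kappa>\<^esub> ac a"
proof -
  have ba: "b = 1 + - a" "a = 1 + - b" "b = - a + 1" "a = - b + 1" using ab by (simp_all add: algebra_simps)
  have neg_a: "v b = v a" if "v a < 0" using ba(3) v_add_less(2)[of "- a" 1] a that by simp
  have neg_b: "v b = v a" if "v b < 0" using ba(4) v_add_less(2)[of "- b" 1] b that by simp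
  consider "v a > 0" | "v b > 0" | "v a = 0" "v b = 0" | "v a < 0" using neg_b by linarith
  then show ?thesis
  proof cases
    case 1
    then show ?thesis using that(1) one_plus_pos_val[of "- a"] a ba(1) by simp
  next
    case 2
    then show ?thesis using that(2) one_plus_pos_val[of "- b"] b ba(2) by simp
  next
    case 3
    then have "ac a \<oplus>\<^bsub>\<kappa>\<^esub> ac b = res v (a + b)"
      using res_add a b by (simp add: ac_unit val_ring_def)
    then show ?thesis using that(3) 3 ab res_one by simp
  next
    case 4
    define e where "e = v a"
    have vb: "v b = e" using neg_a 4 e_def by simp
    have "unit_part a + unit_part b = (a + b) / \<pi> powi e"
      unfolding unit_part_def using vb by (simp add: e_def add_divide_distrib)
    then have "unit_part a + unit_part b = \<pi> powi (- e)"
      using ab by (simp add: power_int_minus divide_inverse)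
    then have ub: "unit_part b = \<pi> powi (- e) + - unit_part a" by (simp add: algebra_simps)
    have "\<pi> powi (- e) \<in> mpow v 1"
      using v_power_int[of \<pi> "- e"] uniformizer 4 e_def by (simp add: mpow_def)
    then have p: "\<pi> powi (- e) \<in> val_ring v" "res v (\<pi> powi (- e)) = \<zero>\<^bsub>\<kappa>\<^esub>"
      using mpow_subset_val_ring res_eq_zero_iff by auto
    have "ac b = res v (\<pi> powi (- e)) \<oplus>\<^bsub>\<kappa>\<^esub> res v (- unit_part a)"
      unfolding ac_def ub
      by (rule res_add) (use p(1) unit_part_in_val_ring[OF a] val_ring_uminus in auto)
    also have "res v (- unit_part a) = \<ominus>\<^bsub>\<kappa>\<^esub> ac a"
      unfolding ac_def using unit_part_in_val_ring[OF a] by (rule res_uminus)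
    finally have "ac b = \<ominus>\<^bsub>\<kappa>\<^esub> ac a" using p(2) ac_nonzero[OF a] by simp
    then show ?thesis using that(4) 4 vb e_def by simp
  qed
qed

subsection \<open>Construction of the tame symbol\<close>

abbreviation minus_one :: "'a set" where "minus_one \<equiv> \<ominus>\<^bsub>\<kappa>\<^esub> \<one>\<^bsub>\<kappa>\<^esub>"

lemma minus_one: "minus_one \<in> carrier \<kappa>" "minus_one \<noteq> \<zero>\<^bsub>\<kappa>\<^esub>"
  using \<kappa>.neg_nonzero[of "\<one>\<^bsub>\<kappa>\<^esub>"] by auto

lemma map_ac_KM_gens: "\<forall>x\<in>set xs. x \<noteq> 0 \<Longrightarrow> map ac xs \<in> KM_gens \<kappa> (length xs)"
  using ac_nonzero by (auto simp: KM_gens_iff)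

lemma symb_ac_steinberg:
  assumes a: "a \<noteq> 0" and b: "b \<noteq> 0" and ab: "a + b = 1"
    and gen: "xs @ [ac a, ac b] @ ys \<in> KM_gens \<kappa> n"
  shows "symb \<kappa> (xs @ [ac a, ac b] @ ys) = \<one>\<^bsub>KM \<kappa> n\<^esub>"
  using steinberg_val_cases[OF a b ab]
proof cases
  case 1
  then show ?thesis using \<kappa>.symb_one_entry[of "xs @ [ac a]" ys n] gen by simp
next
  case 2
  then show ?thesis using \<kappa>.symb_one_entry[of xs "ac b # ys" n] gen by simp
next
  case 3
  then show ?thesis using symb_steinberg[OF gen] by simp
next
  case 4
  then show ?thesis using \<kappa>.symb_a_neg_a[of xs "ac a" ys n] gen by simp
qed

text \<open>Writing \<open>x = \<pi>\<^sup>e u\<close> with \<open>e = v x\<close> and \<open>u\<close> a unit, the tame symbol \<open>\<partial>\<close> must satisfy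
  \<open>\<partial>({x}\<cdot>\<alpha>) = e\<cdot>(s(\<alpha>) + {-1}\<cdot>\<partial>\<alpha>) - {ac x}\<cdot>\<partial>\<alpha>\<close>, where the specialisation \<open>s\<close> maps
  \<open>{x\<^sub>1,...,x\<^sub>n}\<close> to \<open>{ac x\<^sub>1,...,ac x\<^sub>n}\<close>, and \<open>\<partial>{x} = v x\<close> in \<open>K\<^sub>0(\<kappa>) = \<int>\<close>.
  On symbols this recursion is taken as the definition; the value on the empty list is junk.\<close>

fun tame_list :: "'a list \<Rightarrow> ('a set list \<Rightarrow>\<^sub>0 int) set" where
  "tame_list [] = \<one>\<^bsub>KM \<kappa> 0\<^esub>"
| "tame_list [x] = symb \<kappa> [] [^]\<^bsub>KM \<kappa> 0\<^esub> v x"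
| "tame_list (x # y # zs) =
     (symb \<kappa> (map ac (y # zs)) [^]\<^bsub>KM \<kappa> (Suc (length zs))\<^esub> v x)
     \<otimes>\<^bsub>KM \<kappa> (Suc (length zs))\<^esub> (lmul \<kappa> (length zs) minus_one (tame_list (y # zs)) [^]\<^bsub>KM \<kappa> (Suc (length zs))\<^esub> v x)
     \<otimes>\<^bsub>KM \<kappa> (Suc (length zs))\<^esub> inv\<^bsub>KM \<kappa> (Suc (length zs))\<^esub> (lmul \<kappa> (length zs) (ac x) (tame_list (y # zs)))"

lemma tame_list_Cons:
  assumes "L \<noteq> []"
  shows "tame_list (x # L) =
     (symb \<kappa> (map ac L) [^]\<^bsub>KM \<kappa> (length L)\<^esub> v x)
     \<otimes>\<^bsub>KM \<kappa> (length L)\<^esub> (lmul \<kappa> (length L - 1) minus_one (tame_list L) [^]\<^bsub>KM \<kappa> (length L)\<^esub> v x)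
     \<otimes>\<^bsub>KM \<kappa> (length L)\<^esub> inv\<^bsub>KM \<kappa> (length L)\<^esub> (lmul \<kappa> (length L - 1) (ac x) (tame_list L))"
  using assms by (cases L) auto

lemma symb_Nil_closed: "symb \<kappa> [] \<in> carrier (KM \<kappa> 0)"
  by (rule symb_closed) (simp add: KM_gens_iff)

lemma tame_list_closed: "\<forall>x\<in>set xs. x \<noteq> 0 \<Longrightarrow> xs \<noteq> [] \<Longrightarrow> tame_list xs \<in> carrier (KM \<kappa> (length xs - 1))"
proof (induction xs rule: tame_list.induct)
  case 1 then show ?case by simp
next
  case (2 x)
  then show ?case using group.int_pow_closed[OF group_KM symb_Nil_closed] by simp
next
  case (3 x y zs)
  interpret G: comm_group "KM \<kappa> (Suc (length zs))" by (rule comm_group_KM)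
  have T: "tame_list (y # zs) \<in> carrier (KM \<kappa> (length zs))" using 3 by simp
  have S: "symb \<kappa> (map ac (y # zs)) \<in> carrier (KM \<kappa> (Suc (length zs)))"
    using symb_closed[OF map_ac_KM_gens[of "y # zs"]] 3 by simp
  have L1: "lmul \<kappa> (length zs) minus_one (tame_list (y # zs)) \<in> carrier (KM \<kappa> (Suc (length zs)))"
    using \<kappa>.lmul_closed[OF minus_one T] .
  have L2: "lmul \<kappa> (length zs) (ac x) (tame_list (y # zs)) \<in> carrier (KM \<kappa> (Suc (length zs)))"
    using \<kappa>.lmul_closed[OF _ _ T] ac_nonzero 3 by simp
  show ?case using S L1 L2 by simp
qed

lemma tame_list_mult_hd:
  assumes ys: "\<forall>y\<in>set ys. y \<noteq> 0" and a: "a \<noteq> 0" and b: "b \<noteq> 0"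
  shows "tame_list (a * b # ys) = tame_list (a # ys) \<otimes>\<^bsub>KM \<kappa> (length ys)\<^esub> tame_list (b # ys)"
proof (cases ys)
  case Nil
  interpret G: comm_group "KM \<kappa> 0" by (rule comm_group_KM)
  show ?thesis using Nil symb_Nil_closed a b by (simp add: v_mult G.int_pow_mult)
next
  case (Cons y zs)
  let ?G = "KM \<kappa> (Suc (length zs))" and ?D = "tame_list (y # zs)"
  interpret G: comm_group ?G by (rule comm_group_KM)
  have D: "?D \<in> carrier (KM \<kappa> (length zs))" using tame_list_closed[of "y # zs"] ys Cons by simp
  have "symb \<kappa> (map ac (y # zs)) \<in> carrier ?G"
    using symb_closed[OF map_ac_KM_gens[of "y # zs"]] ys Cons by simp
  moreover have "lmul \<kappa> (length zs) c ?D \<in> carrier ?G" if "c \<in> carrier \<kappa>" "c \<noteq> \<zero>\<^bsub>\<kappa>\<^esub>" for c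
    using \<kappa>.lmul_closed[OF that D] .
  moreover have "lmul \<kappa> (length zs) (ac (a * b)) ?D
      = lmul \<kappa> (length zs) (ac a) ?D \<otimes>\<^bsub>?G\<^esub> lmul \<kappa> (length zs) (ac b) ?D"
    using ac_mult[OF a b] \<kappa>.lmul_mult[OF ac_nonzero[OF a] ac_nonzero[OF b] D] by simp
  ultimately show ?thesis
    using Cons a b G.int_pow_add_mult_inv minus_one ac_nonzero[OF a] ac_nonzero[OF b] by (simp add: v_mult)
qed

lemma tame_list_mult:
  assumes xs: "\<forall>x\<in>set xs. x \<noteq> 0" and ys: "\<forall>y\<in>set ys. y \<noteq> 0" and a: "a \<noteq> 0" and b: "b \<noteq> 0"
  shows "tame_list (xs @ [a * b] @ ys) = tame_list (xs @ [a] @ ys) \<otimes>\<^bsub>KM \<kappa> (length xs + length ys)\<^esub> tame_list (xs @ [b] @ ys)"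
  using xs
proof (induction xs)
  case Nil
  then show ?case using tame_list_mult_hd[OF ys a b] by simp
next
  case (Cons x xs')
  define La where "La = xs' @ [a] @ ys"
  define Lb where "Lb = xs' @ [b] @ ys"
  define Lab where "Lab = xs' @ [a * b] @ ys"
  have ne: "La \<noteq> []" "Lb \<noteq> []" "Lab \<noteq> []" unfolding La_def Lb_def Lab_def by simp_all
  have len: "length La = Suc (length xs' + length ys)" "length Lb = Suc (length xs' + length ys)"
    "length Lab = Suc (length xs' + length ys)" unfolding La_def Lb_def Lab_def by simp_all
  let ?n = "length xs' + length ys"
  interpret G: comm_group "KM \<kappa> (Suc ?n)" by (rule comm_group_KM)
  have nz: "\<forall>x\<in>set La. x \<noteq> 0" "\<forall>x\<in>set Lb. x \<noteq> 0" "\<forall>x\<in>set Lab. x \<noteq> 0"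
    using Cons.prems ys a b unfolding La_def Lb_def Lab_def by auto
  have x: "x \<noteq> 0" using Cons.prems by simp
  have IH: "tame_list Lab = tame_list La \<otimes>\<^bsub>KM \<kappa> ?n\<^esub> tame_list Lb" using Cons.IH Cons.prems unfolding La_def Lb_def Lab_def by simp
  have TA: "tame_list La \<in> carrier (KM \<kappa> ?n)" using tame_list_closed[OF nz(1) ne(1)] len by simp
  have TB: "tame_list Lb \<in> carrier (KM \<kappa> ?n)" using tame_list_closed[OF nz(2) ne(2)] len by simp
  have SA: "symb \<kappa> (map ac La) \<in> carrier (KM \<kappa> (Suc ?n))" using symb_closed[OF map_ac_KM_gens[OF nz(1)]] len by simp
  have SB: "symb \<kappa> (map ac Lb) \<in> carrier (KM \<kappa> (Suc ?n))" using symb_closed[OF map_ac_KM_gens[OF nz(2)]] len by simp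
  have Sab: "symb \<kappa> (map ac Lab) = symb \<kappa> (map ac La) \<otimes>\<^bsub>KM \<kappa> (Suc ?n)\<^esub> symb \<kappa> (map ac Lb)"
  proof -
    have g: "map ac xs' @ [ac a] @ map ac ys \<in> KM_gens \<kappa> (Suc ?n)" using map_ac_KM_gens[OF nz(1)] len unfolding La_def by simp
    show ?thesis using \<kappa>.symb_mult[OF g, of "ac b"] ac_nonzero[OF b] ac_mult[OF a b] unfolding La_def Lb_def Lab_def by simp
  qed
  have hM: "group_hom (KM \<kappa> ?n) (KM \<kappa> (Suc ?n)) (lmul \<kappa> ?n minus_one)" using \<kappa>.group_hom_lmul[OF minus_one] .
  have hx: "group_hom (KM \<kappa> ?n) (KM \<kappa> (Suc ?n)) (lmul \<kappa> ?n (ac x))" using \<kappa>.group_hom_lmul ac_nonzero[OF x] by simp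
  have PM: "lmul \<kappa> ?n minus_one (tame_list Lab) = lmul \<kappa> ?n minus_one (tame_list La) \<otimes>\<^bsub>KM \<kappa> (Suc ?n)\<^esub> lmul \<kappa> ?n minus_one (tame_list Lb)"
    using IH group_hom.hom_mult[OF hM TA TB] by simp
  have Px: "lmul \<kappa> ?n (ac x) (tame_list Lab) = lmul \<kappa> ?n (ac x) (tame_list La) \<otimes>\<^bsub>KM \<kappa> (Suc ?n)\<^esub> lmul \<kappa> ?n (ac x) (tame_list Lb)"
    using IH group_hom.hom_mult[OF hx TA TB] by simp
  have c: "lmul \<kappa> ?n minus_one (tame_list La) \<in> carrier (KM \<kappa> (Suc ?n))" "lmul \<kappa> ?n minus_one (tame_list Lb) \<in> carrier (KM \<kappa> (Suc ?n))"
    "lmul \<kappa> ?n (ac x) (tame_list La) \<in> carrier (KM \<kappa> (Suc ?n))" "lmul \<kappa> ?n (ac x) (tame_list Lb) \<in> carrier (KM \<kappa> (Suc ?n))"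
    using group_hom.hom_closed[OF hM TA] group_hom.hom_closed[OF hM TB]
      group_hom.hom_closed[OF hx TA] group_hom.hom_closed[OF hx TB] by simp_all
  have "tame_list (x # Lab) = tame_list (x # La) \<otimes>\<^bsub>KM \<kappa> (Suc ?n)\<^esub> tame_list (x # Lb)"
    unfolding tame_list_Cons[OF ne(1)] tame_list_Cons[OF ne(2)] tame_list_Cons[OF ne(3)] len
    using G.int_pow_mult_inv_distrib[OF SA SB c] Sab PM Px by simp
  then show ?case unfolding La_def Lb_def Lab_def by simp
qed

lemma tame_list_steinberg_pair:
  assumes a: "a \<noteq> 0" and b: "b \<noteq> 0" and s: "a + b = 1"
  shows "tame_list [a, b] = \<one>\<^bsub>KM \<kappa> 1\<^esub>"
proof -
  interpret G: comm_group "KM \<kappa> 1" by (rule comm_group_KM)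
  interpret G': comm_group "KM \<kappa> (Suc 0)" by (rule comm_group_KM)
  interpret G0: comm_group "KM \<kappa> 0" by (rule comm_group_KM)
  have ra: "ac a \<in> carrier \<kappa>" "ac a \<noteq> \<zero>\<^bsub>\<kappa>\<^esub>" and rb: "ac b \<in> carrier \<kappa>" "ac b \<noteq> \<zero>\<^bsub>\<kappa>\<^esub>"
    using ac_nonzero[OF a] ac_nonzero[OF b] by auto
  have A_eq: "tame_list [a, b] = symb \<kappa> [ac b] [^]\<^bsub>KM \<kappa> 1\<^esub> v a \<otimes>\<^bsub>KM \<kappa> 1\<^esub>
      (lmul \<kappa> 0 minus_one (symb \<kappa> [] [^]\<^bsub>KM \<kappa> 0\<^esub> v b) [^]\<^bsub>KM \<kappa> 1\<^esub> v a) \<otimes>\<^bsub>KM \<kappa> 1\<^esub>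
      inv\<^bsub>KM \<kappa> 1\<^esub> lmul \<kappa> 0 (ac a) (symb \<kappa> [] [^]\<^bsub>KM \<kappa> 0\<^esub> v b)"
    by simp
  have nilg: "[] \<in> KM_gens \<kappa> 0" by (simp add: KM_gens_iff)
  have hM: "group_hom (KM \<kappa> 0) (KM \<kappa> 1) (lmul \<kappa> 0 minus_one)" using \<kappa>.group_hom_lmul[OF minus_one] by simp
  have ha: "group_hom (KM \<kappa> 0) (KM \<kappa> 1) (lmul \<kappa> 0 (ac a))" using \<kappa>.group_hom_lmul[OF ra] by simp
  have LM: "lmul \<kappa> 0 minus_one (symb \<kappa> [] [^]\<^bsub>KM \<kappa> 0\<^esub> v b) = symb \<kappa> [minus_one] [^]\<^bsub>KM \<kappa> 1\<^esub> v b"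
    using group_hom.hom_int_pow[OF hM symb_Nil_closed] \<kappa>.lmul_symb[OF minus_one nilg] by simp
  have La: "lmul \<kappa> 0 (ac a) (symb \<kappa> [] [^]\<^bsub>KM \<kappa> 0\<^esub> v b) = symb \<kappa> [ac a] [^]\<^bsub>KM \<kappa> 1\<^esub> v b"
    using group_hom.hom_int_pow[OF ha symb_Nil_closed] \<kappa>.lmul_symb[OF ra nilg] by simp
  have gM: "[minus_one] \<in> KM_gens \<kappa> 1" and ga: "[ac a] \<in> KM_gens \<kappa> 1"
    using minus_one ra by (auto simp: KM_gens_iff)
  have sM: "symb \<kappa> [minus_one] \<in> carrier (KM \<kappa> 1)" and sa: "symb \<kappa> [ac a] \<in> carrier (KM \<kappa> 1)"
    using symb_closed[OF gM] symb_closed[OF ga] by auto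
  show ?thesis
    using steinberg_val_cases[OF a b s]
  proof cases
    case 1
    moreover have "symb \<kappa> ([] @ [\<one>\<^bsub>\<kappa>\<^esub>] @ []) = \<one>\<^bsub>KM \<kappa> 1\<^esub>"
      by (rule \<kappa>.symb_one_entry) (simp add: KM_gens_iff)
    ultimately show ?thesis using A_eq LM La sM sa by simp
  next
    case 2
    moreover have "lmul \<kappa> 0 \<one>\<^bsub>\<kappa>\<^esub> (symb \<kappa> [] [^]\<^bsub>KM \<kappa> 0\<^esub> v b) = \<one>\<^bsub>KM \<kappa> 1\<^esub>"
      using \<kappa>.lmul_one[of "symb \<kappa> [] [^]\<^bsub>KM \<kappa> 0\<^esub> v b" 0] symb_Nil_closed by simp
    ultimately show ?thesis using A_eq LM sM by simp
  next
    case 3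
    then show ?thesis using A_eq LM La sM sa by simp
  next
    case 4
    then have "ac b = minus_one \<otimes>\<^bsub>\<kappa>\<^esub> ac a" using ra by (simp add: \<kappa>.l_minus)
    then have "symb \<kappa> [ac b] = symb \<kappa> [minus_one] \<otimes>\<^bsub>KM \<kappa> 1\<^esub> symb \<kappa> [ac a]"
      using \<kappa>.symb_mult[of "[]" minus_one "[]" 1 "ac a"] gM ra by simp
    moreover have "symb \<kappa> [minus_one] \<otimes>\<^bsub>KM \<kappa> 1\<^esub> symb \<kappa> [minus_one] = \<one>\<^bsub>KM \<kappa> 1\<^esub>"
      using \<kappa>.symb_neg_one_square[of "[]" "[]" 1] gM by simp
    moreover note G.int_pow_cancel_square_one[OF sM sa G.one_closed G.one_closed G.one_closed, of "v a"]
    ultimately show ?thesis using A_eq LM La 4 sM sa by (simp add: G.int_pow_pow)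
  qed
qed

lemma lmul_tame_list_Cons:
  assumes c: "c \<in> carrier \<kappa>" "c \<noteq> \<zero>\<^bsub>\<kappa>\<^esub>" and b: "b \<noteq> 0"
    and L: "\<forall>x\<in>set L. x \<noteq> 0" "L = z # zs"
  defines "G \<equiv> KM \<kappa> (Suc (Suc (length zs)))"
  shows "lmul \<kappa> (Suc (length zs)) c (tame_list (b # L)) =
     lmul \<kappa> (Suc (length zs)) c (symb \<kappa> (map ac L)) [^]\<^bsub>G\<^esub> v b
     \<otimes>\<^bsub>G\<^esub> lmul \<kappa> (Suc (length zs)) c (lmul \<kappa> (length zs) minus_one (tame_list L)) [^]\<^bsub>G\<^esub> v b
     \<otimes>\<^bsub>G\<^esub> inv\<^bsub>G\<^esub> lmul \<kappa> (Suc (length zs)) c (lmul \<kappa> (length zs) (ac b) (tame_list L))"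
proof -
  interpret h: group_hom "KM \<kappa> (Suc (length zs))" G "lmul \<kappa> (Suc (length zs)) c"
    unfolding G_def by (rule \<kappa>.group_hom_lmul[OF c])
  have E: "tame_list L \<in> carrier (KM \<kappa> (length zs))" using tame_list_closed[OF L(1)] L(2) by simp
  have "symb \<kappa> (map ac L) \<in> carrier (KM \<kappa> (Suc (length zs)))"
    using symb_closed[OF map_ac_KM_gens[OF L(1)]] L(2) by simp
  moreover have "lmul \<kappa> (length zs) minus_one (tame_list L) \<in> carrier (KM \<kappa> (Suc (length zs)))"
    using \<kappa>.lmul_closed[OF minus_one E] .
  moreover have "lmul \<kappa> (length zs) (ac b) (tame_list L) \<in> carrier (KM \<kappa> (Suc (length zs)))"
    using \<kappa>.lmul_closed[OF ac_nonzero[OF b] E] .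
  ultimately show ?thesis using L(2) by (simp add: h.hom_mult h.hom_int_pow h.hom_inv)
qed

lemma tame_list_steinberg_Cons_neg_val:
  assumes a: "a \<noteq> 0" and b: "b \<noteq> 0" and val: "v b = v a" "ac b = \<ominus>\<^bsub>\<kappa>\<^esub> ac a"
    and L: "\<forall>y\<in>set L. y \<noteq> 0" "L = z # zs"
  shows "tame_list (a # b # L) = \<one>\<^bsub>KM \<kappa> (Suc (Suc (length zs)))\<^esub>"
proof -
  let ?m = "length zs"
  let ?G1 = "KM \<kappa> (Suc ?m)" and ?G2 = "KM \<kappa> (Suc (Suc ?m))"
  interpret G1: comm_group ?G1 by (rule comm_group_KM)
  interpret G2: comm_group ?G2 by (rule comm_group_KM)
  have ra: "ac a \<in> carrier \<kappa>" "ac a \<noteq> \<zero>\<^bsub>\<kappa>\<^esub>" and rb: "ac b \<in> carrier \<kappa>" "ac b \<noteq> \<zero>\<^bsub>\<kappa>\<^esub>"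
    using ac_nonzero[OF a] ac_nonzero[OF b] by auto
  have ac_b: "ac b = minus_one \<otimes>\<^bsub>\<kappa>\<^esub> ac a" using val(2) ra by (simp add: \<kappa>.l_minus)
  define E where "E = tame_list L"
  define S where "S = symb \<kappa> (map ac L)"
  have E: "E \<in> carrier (KM \<kappa> ?m)" unfolding E_def using tame_list_closed[OF L(1)] L(2) by simp
  have gS: "map ac L \<in> KM_gens \<kappa> (Suc ?m)" using map_ac_KM_gens[OF L(1)] L(2) by simp
  have S: "S \<in> carrier ?G1" unfolding S_def using symb_closed[OF gS] .
  have LME: "lmul \<kappa> ?m minus_one E \<in> carrier ?G1" and LaE: "lmul \<kappa> ?m (ac a) E \<in> carrier ?G1"
    using \<kappa>.lmul_closed[OF _ _ E] minus_one ra by auto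
  define p where "p = lmul \<kappa> (Suc ?m) minus_one S"
  define q where "q = lmul \<kappa> (Suc ?m) (ac a) S"
  define r where "r = lmul \<kappa> (Suc ?m) minus_one (lmul \<kappa> ?m minus_one E)"
  define s where "s = lmul \<kappa> (Suc ?m) minus_one (lmul \<kappa> ?m (ac a) E)"
  define t where "t = lmul \<kappa> (Suc ?m) (ac a) (lmul \<kappa> ?m minus_one E)"
  have closed: "p \<in> carrier ?G2" "q \<in> carrier ?G2" "r \<in> carrier ?G2" "s \<in> carrier ?G2" "t \<in> carrier ?G2"
    unfolding p_def q_def r_def s_def t_def using \<kappa>.lmul_closed minus_one ra S LME LaE by auto
  have "p \<otimes>\<^bsub>?G2\<^esub> p = \<one>\<^bsub>?G2\<^esub>" "r \<otimes>\<^bsub>?G2\<^esub> r = \<one>\<^bsub>?G2\<^esub>" "s \<otimes>\<^bsub>?G2\<^esub> t = \<one>\<^bsub>?G2\<^esub>"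
    unfolding p_def r_def s_def t_def
    using \<kappa>.lmul_neg_one_square[OF S] \<kappa>.lmul_neg_one_square[OF LME] \<kappa>.lmul_anticomm[OF minus_one ra E]
    by simp_all
  note cancel = G2.int_pow_cancel_square_one[OF closed this, of "v a"]
  have "lmul \<kappa> ?m (ac b) E = lmul \<kappa> ?m minus_one E \<otimes>\<^bsub>?G1\<^esub> lmul \<kappa> ?m (ac a) E"
    using ac_b \<kappa>.lmul_mult[OF minus_one ra E] by simp
  then have "lmul \<kappa> (Suc ?m) minus_one (tame_list (b # L)) = p [^]\<^bsub>?G2\<^esub> v a \<otimes>\<^bsub>?G2\<^esub> r [^]\<^bsub>?G2\<^esub> v a
      \<otimes>\<^bsub>?G2\<^esub> inv\<^bsub>?G2\<^esub> (r \<otimes>\<^bsub>?G2\<^esub> s)"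
    unfolding p_def r_def s_def S_def E_def using lmul_tame_list_Cons[OF minus_one b L] val LME LaE
    by (simp add: group_hom.hom_mult[OF \<kappa>.group_hom_lmul[OF minus_one]] E_def)
  moreover have "lmul \<kappa> (Suc ?m) (ac a) (tame_list (b # L)) = q [^]\<^bsub>?G2\<^esub> v a \<otimes>\<^bsub>?G2\<^esub> t [^]\<^bsub>?G2\<^esub> v a
      \<otimes>\<^bsub>?G2\<^esub> inv\<^bsub>?G2\<^esub> \<one>\<^bsub>?G2\<^esub>"
    unfolding q_def t_def S_def E_def using lmul_tame_list_Cons[OF ra b L] val \<kappa>.lmul_a_neg_a[OF ra E]
    by (simp add: E_def)
  moreover have "symb \<kappa> (ac b # map ac L) = p \<otimes>\<^bsub>?G2\<^esub> q"
    unfolding p_def q_def S_def using \<kappa>.lmul_symb[OF rb gS] ac_b \<kappa>.lmul_mult[OF minus_one ra symb_closed[OF gS]]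
    by simp
  ultimately show ?thesis using cancel L(2) by simp
qed

lemma tame_list_steinberg_Cons:
  assumes a: "a \<noteq> 0" and b: "b \<noteq> 0" and ab: "a + b = 1" and L: "\<forall>y\<in>set L. y \<noteq> 0" "L = z # zs"
  shows "tame_list (a # b # L) = \<one>\<^bsub>KM \<kappa> (Suc (Suc (length zs)))\<^esub>"
proof -
  let ?m = "length zs"
  let ?G1 = "KM \<kappa> (Suc ?m)" and ?G2 = "KM \<kappa> (Suc (Suc ?m))"
  interpret G1: comm_group ?G1 by (rule comm_group_KM)
  interpret G2: comm_group ?G2 by (rule comm_group_KM)
  have ra: "ac a \<in> carrier \<kappa>" "ac a \<noteq> \<zero>\<^bsub>\<kappa>\<^esub>" and rb: "ac b \<in> carrier \<kappa>" "ac b \<noteq> \<zero>\<^bsub>\<kappa>\<^esub>"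
    using ac_nonzero[OF a] ac_nonzero[OF b] by auto
  define E where "E = tame_list L"
  define B where "B = tame_list (b # L)"
  have E: "E \<in> carrier (KM \<kappa> ?m)" unfolding E_def using tame_list_closed[OF L(1)] L(2) by simp
  have B: "B \<in> carrier ?G1" unfolding B_def using tame_list_closed[of "b # L"] L b by simp
  have gS: "map ac L \<in> KM_gens \<kappa> (Suc ?m)" using map_ac_KM_gens[OF L(1)] L(2) by simp
  have B_eq: "B = symb \<kappa> (map ac L) [^]\<^bsub>?G1\<^esub> v b \<otimes>\<^bsub>?G1\<^esub> lmul \<kappa> ?m minus_one E [^]\<^bsub>?G1\<^esub> v b
      \<otimes>\<^bsub>?G1\<^esub> inv\<^bsub>?G1\<^esub> lmul \<kappa> ?m (ac b) E"
    unfolding B_def E_def L(2) by simp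
  have A_eq: "tame_list (a # b # L) = symb \<kappa> (ac b # map ac L) [^]\<^bsub>?G2\<^esub> v a
      \<otimes>\<^bsub>?G2\<^esub> lmul \<kappa> (Suc ?m) minus_one B [^]\<^bsub>?G2\<^esub> v a \<otimes>\<^bsub>?G2\<^esub> inv\<^bsub>?G2\<^esub> lmul \<kappa> (Suc ?m) (ac a) B"
    unfolding B_def L(2) by simp
  show ?thesis
    using steinberg_val_cases[OF a b ab]
  proof cases
    case 1
    then have "B = \<one>\<^bsub>?G1\<^esub>" using B_eq \<kappa>.lmul_one[OF E] by simp
    moreover have "symb \<kappa> ([] @ [\<one>\<^bsub>\<kappa>\<^esub>] @ map ac L) = \<one>\<^bsub>?G2\<^esub>"
      by (rule \<kappa>.symb_one_entry) (use gS in \<open>auto simp: KM_gens_iff\<close>)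
    moreover have lmul_one: "lmul \<kappa> (Suc ?m) c \<one>\<^bsub>?G1\<^esub> = \<one>\<^bsub>?G2\<^esub>"
      if "c \<in> carrier \<kappa>" "c \<noteq> \<zero>\<^bsub>\<kappa>\<^esub>" for c
      using group_hom.hom_one[OF \<kappa>.group_hom_lmul[OF that]] .
    ultimately show ?thesis using A_eq lmul_one[OF minus_one] lmul_one[OF ra] 1 by simp
  next
    case 2
    then show ?thesis using A_eq \<kappa>.lmul_one[OF B] by simp
  next
    case 3
    have "lmul \<kappa> ?m (ac b) E \<in> carrier ?G1" using \<kappa>.lmul_closed[OF rb E] .
    then have "lmul \<kappa> (Suc ?m) (ac a) B = inv\<^bsub>?G2\<^esub> lmul \<kappa> (Suc ?m) (ac a) (lmul \<kappa> ?m (ac b) E)"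
      using lmul_tame_list_Cons[OF ra b L] 3 \<kappa>.lmul_closed[OF ra] by (simp add: B_def E_def)
    also have "lmul \<kappa> (Suc ?m) (ac a) (lmul \<kappa> ?m (ac b) E) = \<one>\<^bsub>?G2\<^esub>"
      using \<kappa>.lmul_steinberg[OF ra rb _ E] 3 by simp
    finally show ?thesis using A_eq 3 by simp
  next
    case 4
    then show ?thesis using tame_list_steinberg_Cons_neg_val[OF a b _ _ L] by simp
  qed
qed

lemma tame_list_steinberg:
  assumes xs: "\<forall>x\<in>set xs. x \<noteq> 0" and ys: "\<forall>y\<in>set ys. y \<noteq> 0" and a: "a \<noteq> 0" and b: "b \<noteq> 0"
    and s: "a + b = 1"
  shows "tame_list (xs @ [a, b] @ ys) = \<one>\<^bsub>KM \<kappa> (Suc (length xs + length ys))\<^esub>"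
  using xs
proof (induction xs)
  case Nil
  show ?case
  proof (cases ys)
    case Nil then show ?thesis using tame_list_steinberg_pair[OF a b s] by simp
  next
    case (Cons z zs) then show ?thesis using tame_list_steinberg_Cons[OF a b s ys] by simp
  qed
next
  case (Cons x xs')
  define L where "L = xs' @ [a, b] @ ys"
  have ne: "L \<noteq> []" unfolding L_def by simp
  let ?n = "Suc (length xs' + length ys)"
  have len: "length L = Suc ?n" unfolding L_def by simp
  interpret G: comm_group "KM \<kappa> (Suc ?n)" by (rule comm_group_KM)
  have nz: "\<forall>x\<in>set L. x \<noteq> 0" using Cons.prems ys a b unfolding L_def by auto
  have x: "x \<noteq> 0" using Cons.prems by simp
  have IH: "tame_list L = \<one>\<^bsub>KM \<kappa> ?n\<^esub>" using Cons.IH Cons.prems unfolding L_def by simp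
  have SL: "symb \<kappa> (map ac L) = \<one>\<^bsub>KM \<kappa> (Suc ?n)\<^esub>"
  proof -
    have g: "map ac xs' @ [ac a, ac b] @ map ac ys \<in> KM_gens \<kappa> (Suc ?n)" using map_ac_KM_gens[OF nz] len unfolding L_def by simp
    show ?thesis using symb_ac_steinberg[OF a b s g] unfolding L_def by simp
  qed
  have hM: "group_hom (KM \<kappa> ?n) (KM \<kappa> (Suc ?n)) (lmul \<kappa> ?n minus_one)" using \<kappa>.group_hom_lmul[OF minus_one] .
  have hx: "group_hom (KM \<kappa> ?n) (KM \<kappa> (Suc ?n)) (lmul \<kappa> ?n (ac x))" using \<kappa>.group_hom_lmul ac_nonzero[OF x] by simp
  have "tame_list (x # L) = \<one>\<^bsub>KM \<kappa> (Suc ?n)\<^esub>"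
    unfolding tame_list_Cons[OF ne] len using SL IH group_hom.hom_one[OF hM] group_hom.hom_one[OF hx] by simp
  then show ?case unfolding L_def by simp
qed

lemma tame_list_units: "\<forall>x\<in>set xs. x \<noteq> 0 \<and> v x = 0 \<Longrightarrow> xs \<noteq> [] \<Longrightarrow> tame_list xs = \<one>\<^bsub>KM \<kappa> (length xs - 1)\<^esub>"
proof (induction xs rule: tame_list.induct)
  case 1 then show ?case by simp
next
  case (2 x)
  interpret G: comm_group "KM \<kappa> 0" by (rule comm_group_KM)
  show ?case using 2 by simp
next
  case (3 x y zs)
  interpret G: comm_group "KM \<kappa> (Suc (length zs))" by (rule comm_group_KM)
  have IH: "tame_list (y # zs) = \<one>\<^bsub>KM \<kappa> (length zs)\<^esub>" using 3 by simp
  have hx: "group_hom (KM \<kappa> (length zs)) (KM \<kappa> (Suc (length zs))) (lmul \<kappa> (length zs) (ac x))"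
    using \<kappa>.group_hom_lmul ac_nonzero 3 by simp
  have hM: "group_hom (KM \<kappa> (length zs)) (KM \<kappa> (Suc (length zs))) (lmul \<kappa> (length zs) minus_one)"
    using \<kappa>.group_hom_lmul[OF minus_one] .
  show ?case using 3 IH group_hom.hom_one[OF hx] group_hom.hom_one[OF hM] by simp
qed

lemma tame_list_uniformizer_units:
  assumes p: "p \<noteq> 0" "v p = 1" and us: "\<forall>u\<in>set us. u \<noteq> 0 \<and> v u = 0"
  shows "tame_list (p # us) = symb \<kappa> (map (res v) us)"
proof (cases us)
  case Nil
  interpret G: comm_group "KM \<kappa> 0" by (rule comm_group_KM)
  show ?thesis using Nil p symb_Nil_closed by simp
next
  case (Cons y zs)
  interpret G: comm_group "KM \<kappa> (Suc (length zs))" by (rule comm_group_KM)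
  have "tame_list (y # zs) = \<one>\<^bsub>KM \<kappa> (length zs)\<^esub>" using tame_list_units[of "y # zs"] us Cons by simp
  moreover have "lmul \<kappa> (length zs) c \<one>\<^bsub>KM \<kappa> (length zs)\<^esub> = \<one>\<^bsub>KM \<kappa> (Suc (length zs))\<^esub>"
    if "c \<in> carrier \<kappa>" "c \<noteq> \<zero>\<^bsub>\<kappa>\<^esub>" for c
    using group_hom.hom_one[OF \<kappa>.group_hom_lmul[OF that]] .
  moreover have "symb \<kappa> (map ac (y # zs)) \<in> carrier (KM \<kappa> (Suc (length zs)))"
    using symb_closed map_ac_KM_gens[of "y # zs"] us Cons by simp
  ultimately have "tame_list (p # us) = symb \<kappa> (map ac us)" using Cons p minus_one ac_nonzero[OF p(1)] by simp
  also have "map ac us = map (res v) us" using us ac_unit by (simp cong: map_cong)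
  finally show ?thesis .
qed

lemma tame_list_extends:
  "\<exists>h\<in>hom (KM fieldR (Suc n)) (KM \<kappa> n). \<forall>us\<in>KM_gens fieldR (Suc n). h (symb fieldR us) = tame_list us"
proof (rule KM_universal[OF comm_group_KM])
  fix us assume "us \<in> KM_gens (fieldR :: 'a ring) (Suc n)"
  then have "length us = Suc n" "\<forall>x\<in>set us. x \<noteq> 0" by (auto simp: fieldR_KM_gens_iff)
  then show "tame_list us \<in> carrier (KM \<kappa> n)" using tame_list_closed[of us] by (cases us) auto
next
  fix xs a b ys
  assume "xs @ [a] @ ys \<in> KM_gens (fieldR :: 'a ring) (Suc n)" "xs @ [b] @ ys \<in> KM_gens (fieldR :: 'a ring) (Suc n)"
    "xs @ [a \<otimes>\<^bsub>fieldR\<^esub> b] @ ys \<in> KM_gens (fieldR :: 'a ring) (Suc n)"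
  then show "tame_list (xs @ [a \<otimes>\<^bsub>fieldR\<^esub> b] @ ys) = tame_list (xs @ [a] @ ys) \<otimes>\<^bsub>KM \<kappa> n\<^esub> tame_list (xs @ [b] @ ys)"
    using tame_list_mult[of xs ys a b] by (simp add: fieldR_KM_gens_iff ball_Un)
next
  fix xs a b ys
  assume "xs @ [a, b] @ ys \<in> KM_gens (fieldR :: 'a ring) (Suc n)" "a \<oplus>\<^bsub>fieldR\<^esub> b = \<one>\<^bsub>fieldR\<^esub>"
  then show "tame_list (xs @ [a, b] @ ys) = \<one>\<^bsub>KM \<kappa> n\<^esub>"
    using tame_list_steinberg[of xs ys a b] by (simp add: fieldR_KM_gens_iff ball_Un)
qed

lemma tame_prop_exists: "\<exists>d. tame_prop v n d"
proof -
  obtain h where h: "h \<in> hom (KM fieldR (Suc n)) (KM \<kappa> n)"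
    "\<forall>us\<in>KM_gens fieldR (Suc n). h (symb fieldR us) = tame_list us"
    using tame_list_extends by blast
  have "tame_prop v n h"
    unfolding tame_prop_def
  proof (intro conjI allI impI)
    fix p us assume A: "p \<noteq> 0 \<and> v p = 1 \<and> length us = n \<and> (\<forall>u\<in>set us. u \<noteq> 0 \<and> v u = 0)"
    then have "p # us \<in> KM_gens fieldR (Suc n)" by (auto simp: fieldR_KM_gens_iff)
    then show "h (symb fieldR (p # us)) = symb \<kappa> (map (res v) us)"
      using h(2) tame_list_uniformizer_units[of p us] A by simp
  next
    fix us assume A: "length us = Suc n \<and> (\<forall>u\<in>set us. u \<noteq> 0 \<and> v u = 0)"
    then have "us \<in> KM_gens fieldR (Suc n)" "us \<noteq> []" by (auto simp: fieldR_KM_gens_iff)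
    then show "h (symb fieldR us) = \<one>\<^bsub>KM \<kappa> n\<^esub>"
      using h(2) tame_list_units[of us] A by simp
  qed (rule h(1))
  then show ?thesis by blast
qed

lemma tame_prop_tame: "tame_prop v n (tame v n)"
  unfolding tame_def using someI_ex[OF tame_prop_exists] .

end

section \<open>Reduction to symbols of units\<close>

lemma inv_mem_subgroup_iff:
  assumes "subgroup H G" "group G" "x \<in> carrier G"
  shows "inv\<^bsub>G\<^esub> x \<in> H \<longleftrightarrow> x \<in> H"
  using assms by (metis group.inv_inv subgroup.m_inv_closed)

lemma symb_move_left_mem:
  assumes H: "subgroup H (KM fieldR N)"
    and nz: "\<forall>x\<in>set P. (x::'a::field) \<noteq> 0" "\<forall>x\<in>set rs. x \<noteq> 0" "\<forall>x\<in>set Q. x \<noteq> 0" "y \<noteq> 0"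
    and len: "length P + length rs + length Q + 1 = N"
  shows "symb fieldR (P @ rs @ [y] @ Q) \<in> H \<longleftrightarrow> symb fieldR (P @ [y] @ rs @ Q) \<in> H"
  using nz(1,2) len
proof (induction rs arbitrary: P)
  case Nil then show ?case by simp
next
  case (Cons r rs')
  have IH: "symb fieldR ((P @ [r]) @ rs' @ [y] @ Q) \<in> H \<longleftrightarrow> symb fieldR ((P @ [r]) @ [y] @ rs' @ Q) \<in> H"
    using Cons.IH[of "P @ [r]"] Cons.prems by simp
  have N: "Suc (Suc (length P + length (rs' @ Q))) = N" using Cons.prems by simp
  have nzP: "\<forall>x\<in>set P. x \<noteq> 0" using Cons.prems by simp
  have nzR: "\<forall>x\<in>set (rs' @ Q). x \<noteq> 0" using Cons.prems nz(3) by (simp add: ball_Un)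
  have r: "r \<noteq> 0" using Cons.prems by simp
  have sw: "symb fieldR (P @ [r, y] @ (rs' @ Q)) = inv\<^bsub>KM fieldR N\<^esub> symb fieldR (P @ [y, r] @ (rs' @ Q))"
    using fieldR_symb_swap[OF nzP nzR r nz(4)] unfolding N .
  have nzA: "\<forall>x\<in>set (P @ [y, r] @ (rs' @ Q)). x \<noteq> 0" using nzP nzR r nz(4) by (simp add: ball_Un)
  have c: "symb fieldR (P @ [y, r] @ (rs' @ Q)) \<in> carrier (KM fieldR N)"
    using fieldR_symb_closed[OF nzA] N by simp
  have "symb fieldR ((P @ [r]) @ [y] @ rs' @ Q) \<in> H \<longleftrightarrow> symb fieldR (P @ [y, r] @ (rs' @ Q)) \<in> H"
    using sw inv_mem_subgroup_iff[OF H group_KM c] by simp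
  then show ?case using IH by simp
qed

context dvr
begin

lemma fieldR_symb_unit_part:
  assumes "\<forall>x\<in>set P. x \<noteq> 0" "\<forall>x\<in>set Q. x \<noteq> 0" "x \<noteq> 0"
  shows "symb fieldR (P @ [x] @ Q) = symb fieldR (P @ [\<pi>] @ Q) [^]\<^bsub>KM fieldR (Suc (length P + length Q))\<^esub> v x
     \<otimes>\<^bsub>KM fieldR (Suc (length P + length Q))\<^esub> symb fieldR (P @ [unit_part x] @ Q)"
proof -
  have "symb fieldR (P @ [x] @ Q) = symb fieldR (P @ [\<pi> powi v x * unit_part x] @ Q)" using unit_part_decomp[of x] by simp
  also have "\<dots> = symb fieldR (P @ [\<pi> powi v x] @ Q) \<otimes>\<^bsub>KM fieldR (Suc (length P + length Q))\<^esub> symb fieldR (P @ [unit_part x] @ Q)"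
    using fieldR_symb_mult[OF assms(1,2) _ unit_part_nonzero[OF assms(3)], of "\<pi> powi v x"] uniformizer by simp
  also have "symb fieldR (P @ [\<pi> powi v x] @ Q) = symb fieldR (P @ [\<pi>] @ Q) [^]\<^bsub>KM fieldR (Suc (length P + length Q))\<^esub> v x"
    using fieldR_symb_powi[OF assms(1,2) uniformizer(1)] by simp
  finally show ?thesis .
qed

lemma symb_with_uniformizer_mem:
  assumes H: "subgroup H (KM fieldR N)" and pz: "\<forall>x\<in>set pz. x \<noteq> 0"
    and B: "\<And>ws. \<forall>w\<in>set ws. w \<noteq> 0 \<and> v w = 0 \<Longrightarrow> length pz + length ws + 1 = N \<Longrightarrow> symb fieldR (pz @ [\<pi>] @ ws) \<in> H"
    and qs: "\<forall>w\<in>set qs. w \<noteq> 0 \<and> v w = 0"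
  shows "\<forall>w\<in>set ts. w \<noteq> 0 \<and> v w = 0 \<Longrightarrow> \<forall>x\<in>set xs. x \<noteq> 0 \<Longrightarrow> length pz + length qs + length ts + length xs + 1 = N
     \<Longrightarrow> symb fieldR (pz @ qs @ [\<pi>] @ ts @ xs) \<in> H"
proof (induction xs arbitrary: ts)
  case Nil
  have "symb fieldR (pz @ [\<pi>] @ qs @ ts) \<in> H" using B[of "qs @ ts"] qs Nil by (simp add: ball_Un)
  moreover have "symb fieldR (pz @ qs @ [\<pi>] @ ts) \<in> H \<longleftrightarrow> symb fieldR (pz @ [\<pi>] @ qs @ ts) \<in> H"
    by (rule symb_move_left_mem[OF H]) (use pz qs Nil uniformizer in simp_all)
  ultimately show ?case by simp
next
  case (Cons x xs)
  have x: "x \<noteq> 0" using Cons.prems by simp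
  let ?P = "pz @ qs @ [\<pi>] @ ts"
  have nzP: "\<forall>y\<in>set ?P. y \<noteq> 0" using pz qs Cons.prems uniformizer by auto
  have nzx: "\<forall>y\<in>set xs. y \<noteq> 0" using Cons.prems by simp
  have N: "Suc (length ?P + length xs) = N" using Cons.prems by simp
  have d: "symb fieldR (?P @ [x] @ xs) = symb fieldR (?P @ [\<pi>] @ xs) [^]\<^bsub>KM fieldR N\<^esub> v x \<otimes>\<^bsub>KM fieldR N\<^esub> symb fieldR (?P @ [unit_part x] @ xs)"
    using fieldR_symb_unit_part[OF nzP nzx x] N by simp
  have s2: "symb fieldR (?P @ [unit_part x] @ xs) \<in> H"
    using Cons.IH[of "ts @ [unit_part x]"] Cons.prems unit_part_nonzero[OF x] v_unit_part[OF x] by simp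
  have s1: "symb fieldR (?P @ [\<pi>] @ xs) \<in> H"
  proof -
    \<comment> \<open>the second \<open>\<pi>\<close> is traded for a unit via \<open>{\<pi>, \<pi>} = {\<pi>, -1}\<close>\<close>
    have "symb fieldR ((pz @ qs) @ [\<pi>, - 1] @ (ts @ xs)) \<in> H"
      using Cons.IH[of "(- 1) # ts"] Cons.prems by simp
    moreover have "symb fieldR ((pz @ qs) @ [\<pi>, \<pi>] @ (ts @ xs)) = symb fieldR ((pz @ qs) @ [\<pi>, - 1] @ (ts @ xs))"
      by (rule fieldR_symb_a_a) (use pz qs Cons.prems uniformizer in \<open>simp_all add: ball_Un\<close>)
    ultimately have "symb fieldR ((pz @ qs @ [\<pi>]) @ [\<pi>] @ ts @ xs) \<in> H" by simp
    moreover have "symb fieldR ((pz @ qs @ [\<pi>]) @ ts @ [\<pi>] @ xs) \<in> H \<longleftrightarrow> symb fieldR ((pz @ qs @ [\<pi>]) @ [\<pi>] @ ts @ xs) \<in> H"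
      by (rule symb_move_left_mem[OF H]) (use pz qs Cons.prems uniformizer in \<open>simp_all add: ball_Un\<close>)
    ultimately show ?thesis by simp
  qed
  show ?case using d s1 s2 H by (simp add: group.subgroup_int_pow_closed[OF group_KM] subgroup.m_closed)
qed

lemma symb_mem_of_unit_symbs_aux:
  assumes H: "subgroup H (KM fieldR N)" and pz: "\<forall>x\<in>set pz. x \<noteq> 0"
    and A: "\<And>ws. \<forall>w\<in>set ws. w \<noteq> 0 \<and> v w = 0 \<Longrightarrow> length pz + length ws = N \<Longrightarrow> symb fieldR (pz @ ws) \<in> H"
    and B: "\<And>ws. \<forall>w\<in>set ws. w \<noteq> 0 \<and> v w = 0 \<Longrightarrow> length pz + length ws + 1 = N \<Longrightarrow> symb fieldR (pz @ [\<pi>] @ ws) \<in> H"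
  shows "\<forall>w\<in>set qs. w \<noteq> 0 \<and> v w = 0 \<Longrightarrow> \<forall>x\<in>set xs. x \<noteq> 0 \<Longrightarrow> length pz + length qs + length xs = N
     \<Longrightarrow> symb fieldR (pz @ qs @ xs) \<in> H"
proof (induction xs arbitrary: qs)
  case Nil
  then show ?case using A[of qs] by simp
next
  case (Cons x xs)
  have x: "x \<noteq> 0" using Cons.prems by simp
  let ?P = "pz @ qs"
  have nzP: "\<forall>y\<in>set ?P. y \<noteq> 0" using pz Cons.prems by (simp add: ball_Un)
  have nzx: "\<forall>y\<in>set xs. y \<noteq> 0" using Cons.prems by simp
  have N: "Suc (length ?P + length xs) = N" using Cons.prems by simp
  have d: "symb fieldR (?P @ [x] @ xs) = symb fieldR (?P @ [\<pi>] @ xs) [^]\<^bsub>KM fieldR N\<^esub> v x \<otimes>\<^bsub>KM fieldR N\<^esub> symb fieldR (?P @ [unit_part x] @ xs)"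
    using fieldR_symb_unit_part[OF nzP nzx x] N by simp
  have s2: "symb fieldR (?P @ [unit_part x] @ xs) \<in> H"
    using Cons.IH[of "qs @ [unit_part x]"] Cons.prems unit_part_nonzero[OF x] v_unit_part[OF x] by simp
  have s1: "symb fieldR (?P @ [\<pi>] @ xs) \<in> H"
    using symb_with_uniformizer_mem[OF H pz B, of qs "[]" xs] Cons.prems by simp
  show ?case using d s1 s2 H by (simp add: group.subgroup_int_pow_closed[OF group_KM] subgroup.m_closed)
qed

lemma symb_mem_of_unit_symbs:
  assumes H: "subgroup H (KM fieldR N)" and pz: "\<forall>x\<in>set pz. x \<noteq> 0"
    and A: "\<And>ws. \<forall>w\<in>set ws. w \<noteq> 0 \<and> v w = 0 \<Longrightarrow> length pz + length ws = N \<Longrightarrow> symb fieldR (pz @ ws) \<in> H"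
    and B: "\<And>ws. \<forall>w\<in>set ws. w \<noteq> 0 \<and> v w = 0 \<Longrightarrow> length pz + length ws + 1 = N \<Longrightarrow> symb fieldR (pz @ [\<pi>] @ ws) \<in> H"
    and xs: "\<forall>x\<in>set xs. x \<noteq> 0" and len: "length pz + length xs = N"
  shows "symb fieldR (pz @ xs) \<in> H"
proof -
  have "symb fieldR (pz @ [] @ xs) \<in> H" by (rule symb_mem_of_unit_symbs_aux[OF H pz A B]) (use xs len in simp_all)
  then show ?thesis by simp
qed

section \<open>Symbols with an entry in \<open>1 + m\<^sup>k\<close>\<close>

lemma one_plus_antimono: "k \<le> l \<Longrightarrow> one_plus v l \<subseteq> one_plus v k"
  using mpow_antimono by (auto simp: one_plus_def)

lemma one_plus_unit:
  assumes u: "u \<in> one_plus v k" and k: "k \<ge> 1"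
  shows "u \<noteq> 0" "v u = 0" "res v u = \<one>\<^bsub>\<kappa>\<^esub>"
proof -
  obtain x where x: "u = 1 + x" "x \<in> mpow v k" using u by (auto simp: one_plus_def)
  then have "x = 0 \<or> v x > 0" using k by (auto simp: mpow_def)
  then show "u \<noteq> 0" "v u = 0" "res v u = \<one>\<^bsub>\<kappa>\<^esub>"
    using one_plus_pos_val[of x] x(1) res_one ac_unit by (metis add.right_neutral one_neq_zero v_one)+
qed

lemma tame_hom: "tame v n \<in> hom (KM fieldR (Suc n)) (KM \<kappa> n)"
  using tame_prop_tame[of n] unfolding tame_prop_def by blast

lemma group_hom_tame: "group_hom (KM fieldR (Suc n)) (KM \<kappa> n) (tame v n)"
  by (simp add: group_hom_def group_hom_axioms_def group_KM tame_hom)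

lemma tame_symb_units:
  "length us = Suc n \<Longrightarrow> \<forall>u\<in>set us. u \<noteq> 0 \<and> v u = 0 \<Longrightarrow> tame v n (symb fieldR us) = \<one>\<^bsub>KM \<kappa> n\<^esub>"
  using tame_prop_tame[of n] unfolding tame_prop_def by blast

lemma tame_symb_uniformizer:
  "length us = n \<Longrightarrow> \<forall>u\<in>set us. u \<noteq> 0 \<and> v u = 0
    \<Longrightarrow> tame v n (symb fieldR (\<pi> # us)) = symb \<kappa> (map (res v) us)"
  using tame_prop_tame[of n] uniformizer unfolding tame_prop_def by blast

lemma tame_symb_one_plus:
  assumes u: "u \<in> one_plus v 1" and xs: "\<forall>x\<in>set xs. x \<noteq> 0" "length xs = n"
  shows "tame v n (symb fieldR (u # xs)) = \<one>\<^bsub>KM \<kappa> n\<^esub>"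
proof -
  have u1: "u \<noteq> 0" "v u = 0" "res v u = \<one>\<^bsub>\<kappa>\<^esub>" using one_plus_unit[OF u] by auto
  let ?H = "kernel (KM fieldR (Suc n)) (KM \<kappa> n) (tame v n)"
  have H: "subgroup ?H (KM fieldR (Suc n))" using group_hom.subgroup_kernel[OF group_hom_tame] .
  have "symb fieldR ([u] @ xs) \<in> ?H"
  proof (rule symb_mem_of_unit_symbs[OF H])
    fix ws assume ws: "\<forall>w\<in>set ws. w \<noteq> 0 \<and> v w = 0" "length [u] + length ws = Suc n"
    then show "symb fieldR ([u] @ ws) \<in> ?H"
      using tame_symb_units[of "u # ws" n] fieldR_symb_closed[of "u # ws"] u1 by (simp add: kernel_def)
  next
    fix ws assume ws: "\<forall>w\<in>set ws. w \<noteq> 0 \<and> v w = 0" "length [u] + length ws + 1 = Suc n"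
    have gen: "[] @ [\<one>\<^bsub>\<kappa>\<^esub>] @ map (res v) ws \<in> KM_gens \<kappa> n"
      using ws res_unit by (auto simp: KM_gens_iff)
    have "tame v n (symb fieldR (\<pi> # u # ws)) = \<one>\<^bsub>KM \<kappa> n\<^esub>"
      using tame_symb_uniformizer[of "u # ws" n] \<kappa>.symb_one_entry[OF gen] ws u1 by simp
    then have "symb fieldR ([] @ [\<pi>, u] @ ws) \<in> ?H"
      using fieldR_symb_closed[of "\<pi> # u # ws"] ws u1 uniformizer by (simp add: kernel_def)
    then show "symb fieldR ([u] @ [\<pi>] @ ws) \<in> ?H"
      using fieldR_symb_swap[of "[]" ws u \<pi>] ws u1 uniformizer subgroup.m_inv_closed[OF H] by simp
  qed (use xs u1 in simp_all)
  then show ?thesis unfolding kernel_def by simp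
qed

theorem prod_sub_one_plus_subset_hatK:
  "prod_sub fieldR n (one_plus v 1) (carrier (KM fieldR n)) \<subseteq> hatK v (Suc n)"
  unfolding hatK.simps
proof (rule field.prod_sub_carrier_subset[OF field_fieldR group_hom.subgroup_kernel[OF group_hom_tame]])
  show "one_plus v 1 \<subseteq> carrier fieldR - {\<zero>\<^bsub>fieldR\<^esub>}" using one_plus_unit by auto
  fix u us assume "u \<in> one_plus v 1" "us \<in> KM_gens (fieldR :: 'a ring) n"
  then show "symb fieldR (u # us) \<in> kernel (KM fieldR (Suc n)) (KM \<kappa> n) (tame v n)"
    using tame_symb_one_plus fieldR_symb_closed[of "u # us"] one_plus_unit
    by (auto simp: kernel_def fieldR_KM_gens_iff)
qed

abbreviation one_plus_hatK :: "nat \<Rightarrow> nat \<Rightarrow> ('a list \<Rightarrow>\<^sub>0 int) set set"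
  where "one_plus_hatK m n \<equiv> prod_sub fieldR n (one_plus v m) (hatK v n)"

lemma hatK_subset_carrier: "hatK v n \<subseteq> carrier (KM fieldR n)"
  by (cases n) (auto simp: kernel_def)

lemma subgroup_one_plus_hatK: "m \<ge> 1 \<Longrightarrow> subgroup (one_plus_hatK m n) (KM fieldR (Suc n))"
  unfolding prod_sub_def
proof (rule group.generate_is_subgroup[OF group_KM], clarify)
  fix u b assume "m \<ge> 1" "u \<in> one_plus v m" "b \<in> hatK v n"
  then have "u \<noteq> 0" "b \<in> carrier (KM (fieldR :: 'a ring) n)"
    using one_plus_unit hatK_subset_carrier by blast+
  then show "lmul fieldR n u b \<in> carrier (KM fieldR (Suc n))"
    using group_hom.hom_closed[OF fieldR_group_hom_lmul] by blast
qed

lemma symb_one_plus_units_mem: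
  assumes "u \<in> one_plus v m" "m \<ge> 1" and ws: "\<forall>w\<in>set ws. w \<noteq> 0 \<and> v w = 0" "length ws = Suc n"
  shows "symb fieldR (u # ws) \<in> one_plus_hatK m (Suc n)"
proof -
  have "symb fieldR ws \<in> hatK v (Suc n)"
    using ws tame_symb_units[OF ws(2)] fieldR_symb_closed[of ws] by (simp add: kernel_def)
  moreover have "symb fieldR (u # ws) = lmul fieldR (Suc n) u (symb fieldR ws)"
    using fieldR_lmul_symb[of u ws] one_plus_unit(1)[OF assms(1,2)] ws by simp
  ultimately show ?thesis unfolding prod_sub_def using assms(1) by (blast intro: generate.incl)
qed

context
  fixes m :: nat and y :: 'a
  assumes m: "m \<ge> 1" and y: "y \<noteq> 0" "v y \<ge> int m"
begin

lemma one_minus_mem_one_plus: "1 - y \<in> one_plus v m" "1 - y * \<pi> \<in> one_plus v m"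
proof -
  have "v (- (y * \<pi>)) \<ge> int m" using y uniformizer by (simp add: v_mult)
  then show "1 - y \<in> one_plus v m" "1 - y * \<pi> \<in> one_plus v m"
    using y unfolding one_plus_def mpow_def by (auto intro!: exI[of _ "- y"] exI[of _ "- (y * \<pi>)"])
qed

lemma one_minus_nonzero: "1 - y \<noteq> 0" "1 - y * \<pi> \<noteq> 0" "1 - \<pi> \<noteq> 0" "v (1 - \<pi>) = 0"
proof -
  show "1 - y \<noteq> 0" "1 - y * \<pi> \<noteq> 0"
    using one_plus_unit(1)[OF one_minus_mem_one_plus(1) m] one_plus_unit(1)[OF one_minus_mem_one_plus(2) m]
    by auto
  show "1 - \<pi> \<noteq> 0" "v (1 - \<pi>) = 0" using one_plus_pos_val(1,2)[of "- \<pi>"] uniformizer by simp_all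
qed

context
  fixes n :: nat and ws :: "'a list"
  assumes ws: "\<forall>w\<in>set ws. w \<noteq> 0 \<and> v w = 0" "length ws = n"
begin

lemma symb_one_minus_pow_succ_mem:
  "symb fieldR ((1 - y * \<pi>) # \<pi> # ws) [^]\<^bsub>KM fieldR (Suc (Suc n))\<^esub> (v y + 1) \<in> one_plus_hatK m (Suc n)"
proof -
  let ?G = "KM fieldR (Suc (Suc n))" and ?u = "1 - y * \<pi>"
  interpret T: subgroup "one_plus_hatK m (Suc n)" ?G by (rule subgroup_one_plus_hatK[OF m])
  have y\<pi>: "y * \<pi> \<noteq> 0" "v (y * \<pi>) = v y + 1" using y uniformizer by (simp_all add: v_mult)
  have wsnz: "\<forall>w\<in>set ws. w \<noteq> 0" using ws by simp
  have "symb fieldR ([] @ [?u, y * \<pi>] @ ws) = \<one>\<^bsub>?G\<^esub>"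
    using fieldR_symb_steinberg[OF _ wsnz, of "[]" ?u "y * \<pi>"] one_minus_nonzero y\<pi> ws by simp
  moreover have "symb fieldR ([?u] @ [y * \<pi>] @ ws) = symb fieldR ([?u] @ [\<pi>] @ ws) [^]\<^bsub>?G\<^esub> v (y * \<pi>)
      \<otimes>\<^bsub>?G\<^esub> symb fieldR ([?u] @ [unit_part (y * \<pi>)] @ ws)"
    using fieldR_symb_unit_part[of "[?u]" ws "y * \<pi>"] one_minus_nonzero wsnz y\<pi> ws by simp
  ultimately have e: "symb fieldR (?u # \<pi> # ws) [^]\<^bsub>?G\<^esub> v (y * \<pi>)
      \<otimes>\<^bsub>?G\<^esub> symb fieldR (?u # unit_part (y * \<pi>) # ws) = \<one>\<^bsub>?G\<^esub>" by simp
  have C: "symb fieldR (?u # unit_part (y * \<pi>) # ws) \<in> one_plus_hatK m (Suc n)"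
    using symb_one_plus_units_mem[OF one_minus_mem_one_plus(2) m] unit_part_nonzero v_unit_part y\<pi> ws by simp
  have "symb fieldR (?u # \<pi> # ws) \<in> carrier ?G" "symb fieldR (?u # unit_part (y * \<pi>) # ws) \<in> carrier ?G"
    by (rule fieldR_symb_closed; use one_minus_nonzero uniformizer unit_part_nonzero y\<pi> ws in simp)+
  then have "inv\<^bsub>?G\<^esub> symb fieldR (?u # unit_part (y * \<pi>) # ws) = symb fieldR (?u # \<pi> # ws) [^]\<^bsub>?G\<^esub> v (y * \<pi>)"
    using group.inv_equality[OF group_KM e] group.int_pow_closed[OF group_KM] by blast
  then show ?thesis using y\<pi> T.m_inv_closed[OF C] by simp
qed

lemma symb_entry_over_one_minus:
  assumes "a \<noteq> 0" "c \<noteq> 0"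
  shows "symb fieldR (a # c * inverse (1 - y * \<pi>) # ws) = symb fieldR (a # c # ws)
    \<otimes>\<^bsub>KM fieldR (Suc (Suc n))\<^esub> inv\<^bsub>KM fieldR (Suc (Suc n))\<^esub> symb fieldR (a # (1 - y * \<pi>) # ws)"
  using fieldR_symb_mult[of "[a]" ws c "inverse (1 - y * \<pi>)"] fieldR_symb_inverse[of "[a]" ws "1 - y * \<pi>"]
    assms one_minus_nonzero ws by simp

lemma symb_one_minus_over_one_minus_mem:
  assumes "a \<in> {1 - \<pi>, 1 - y * \<pi>}"
  shows "symb fieldR (a # (1 - y) * inverse (1 - y * \<pi>) # ws) \<in> one_plus_hatK m (Suc n)"
proof -
  let ?G = "KM fieldR (Suc (Suc n))" and ?T = "one_plus_hatK m (Suc n)" and ?u = "1 - y * \<pi>"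
  interpret T: subgroup ?T ?G by (rule subgroup_one_plus_hatK[OF m])
  have wsnz: "\<forall>w\<in>set ws. w \<noteq> 0" using ws by simp
  have v_one_minus: "v (1 - y) = 0" "v (1 - \<pi>) = 0"
    using one_plus_unit(2)[OF one_minus_mem_one_plus(1) m] one_minus_nonzero(4) by simp_all
  have mem: "symb fieldR (b # c # ws) \<in> ?T" if "b \<in> {?u, 1 - y}" "c \<noteq> 0" "v c = 0" for b c
    using that symb_one_plus_units_mem[OF _ m, of b "c # ws"] one_minus_mem_one_plus ws by auto
  have swap: "symb fieldR (b # c # ws) = inv\<^bsub>?G\<^esub> symb fieldR (c # b # ws)" if "b \<noteq> 0" "c \<noteq> 0" for b c
    using fieldR_symb_swap[of "[]" ws b c] that wsnz ws by simp
  from assms consider "a = 1 - \<pi>" | "a = ?u" by blast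
  then have "symb fieldR (a # (1 - y) # ws) \<in> ?T \<and> symb fieldR (a # ?u # ws) \<in> ?T"
  proof cases
    case 1
    then show ?thesis using swap[of "1 - \<pi>"] mem one_minus_nonzero v_one_minus T.m_inv_closed by simp
  next
    case 2
    have "symb fieldR (?u # ?u # ws) = symb fieldR (?u # - 1 # ws)"
      using fieldR_symb_a_a[of "[]" ws ?u] wsnz one_minus_nonzero ws by simp
    then show ?thesis using 2 mem one_minus_nonzero v_one_minus by simp
  qed
  then show ?thesis
    using symb_entry_over_one_minus[of a "1 - y"] assms one_minus_nonzero T.m_closed T.m_inv_closed by auto
qed

lemma symb_y_one_minus_mem: "symb fieldR (y # (1 - y * \<pi>) # ws) \<in> one_plus_hatK m (Suc n)"
proof -
  let ?G = "KM fieldR (Suc (Suc n))" and ?T = "one_plus_hatK m (Suc n)" and ?u = "1 - y * \<pi>"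
  interpret G: comm_group ?G by (rule comm_group_KM)
  interpret T: subgroup ?T ?G by (rule subgroup_one_plus_hatK[OF m])
  have wsnz: "\<forall>w\<in>set ws. w \<noteq> 0" using ws by simp
  note nz = one_minus_nonzero y(1) uniformizer(1)
  define A where "A a b = symb fieldR (a # b # ws)" for a b
  have A_closed: "A a b \<in> carrier ?G" if "a \<noteq> 0" "b \<noteq> 0" for a b
    unfolding A_def using fieldR_symb_closed[of "a # b # ws"] that ws by simp
  define z where "z = (1 - \<pi>) * y * inverse ?u"
  define w where "w = (1 - y) * inverse ?u"
  have zw: "z \<noteq> 0" "w \<noteq> 0" "z + w = 1"
  proof -
    have "z + w = ?u * inverse ?u" unfolding z_def w_def by (simp add: algebra_simps)
    then show "z + w = 1" using nz by simp
    show "z \<noteq> 0" "w \<noteq> 0" unfolding z_def w_def using nz by simp_all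
  qed
  have c: "A (1 - \<pi>) w \<in> carrier ?G" "A y w \<in> carrier ?G" "A ?u w \<in> carrier ?G"
    using A_closed nz zw by auto
  have "A (1 - \<pi>) w \<otimes>\<^bsub>?G\<^esub> A y w = (A (1 - \<pi>) w \<otimes>\<^bsub>?G\<^esub> A y w \<otimes>\<^bsub>?G\<^esub> inv\<^bsub>?G\<^esub> A ?u w) \<otimes>\<^bsub>?G\<^esub> A ?u w"
    using c by (simp add: G.m_assoc)
  also have "A (1 - \<pi>) w \<otimes>\<^bsub>?G\<^esub> A y w \<otimes>\<^bsub>?G\<^esub> inv\<^bsub>?G\<^esub> A ?u w = A z w"
    unfolding A_def z_def
    using fieldR_symb_mult[of "[]" "w # ws" "(1 - \<pi>) * y" "inverse ?u"] fieldR_symb_mult[of "[]" "w # ws" "1 - \<pi>" y]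
      fieldR_symb_inverse[of "[]" "w # ws" ?u] nz zw wsnz ws by simp
  also have "A z w = \<one>\<^bsub>?G\<^esub>"
    unfolding A_def using fieldR_symb_steinberg[of "[]" ws z w] zw wsnz ws by simp
  finally have "A y w = inv\<^bsub>?G\<^esub> A (1 - \<pi>) w \<otimes>\<^bsub>?G\<^esub> A ?u w"
    using G.inv_solve_left[OF c(2,1,3)] c by simp
  then have "A y w \<in> ?T"
    using symb_one_minus_over_one_minus_mem T.m_closed T.m_inv_closed unfolding A_def w_def by simp
  moreover have "A y (1 - y) = \<one>\<^bsub>?G\<^esub>"
    unfolding A_def using fieldR_symb_steinberg[of "[]" ws y "1 - y"] wsnz nz ws by simp
  ultimately have "inv\<^bsub>?G\<^esub> A y ?u \<in> ?T"
    using symb_entry_over_one_minus[of y "1 - y"] A_closed nz unfolding A_def w_def by simp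
  then show ?thesis
    using inv_mem_subgroup_iff[OF T.subgroup_axioms group_KM A_closed[of y ?u]] nz by (simp add: A_def)
qed

lemma symb_one_minus_pow_mem:
  "symb fieldR ((1 - y * \<pi>) # \<pi> # ws) [^]\<^bsub>KM fieldR (Suc (Suc n))\<^esub> v y \<in> one_plus_hatK m (Suc n)"
proof -
  let ?G = "KM fieldR (Suc (Suc n))" and ?T = "one_plus_hatK m (Suc n)" and ?u = "1 - y * \<pi>"
  interpret G: comm_group ?G by (rule comm_group_KM)
  interpret T: subgroup ?T ?G by (rule subgroup_one_plus_hatK[OF m])
  have wsnz: "\<forall>w\<in>set ws. w \<noteq> 0" using ws by simp
  note nz = one_minus_nonzero y(1) uniformizer(1) unit_part_nonzero[OF y(1)]
  let ?X = "symb fieldR (?u # \<pi> # ws)" and ?Y = "symb fieldR (unit_part y # ?u # ws)"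
  have c: "?X \<in> carrier ?G" "?Y \<in> carrier ?G"
    by (rule fieldR_symb_closed; use nz ws in simp)+
  have "symb fieldR ([] @ [y] @ ?u # ws) = symb fieldR ([] @ [\<pi>] @ ?u # ws) [^]\<^bsub>?G\<^esub> v y \<otimes>\<^bsub>?G\<^esub> ?Y"
    using fieldR_symb_unit_part[of "[]" "?u # ws" y] nz wsnz ws by simp
  moreover have "symb fieldR ([] @ [\<pi>, ?u] @ ws) = inv\<^bsub>?G\<^esub> ?X"
    using fieldR_symb_swap[of "[]" ws \<pi> ?u] nz wsnz ws by simp
  ultimately have "inv\<^bsub>?G\<^esub> (?X [^]\<^bsub>?G\<^esub> v y) = symb fieldR (y # ?u # ws) \<otimes>\<^bsub>?G\<^esub> inv\<^bsub>?G\<^esub> ?Y"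
    using c by (simp add: G.int_pow_inv G.m_assoc)
  moreover have "?Y \<in> ?T"
  proof -
    have "symb fieldR (?u # unit_part y # ws) \<in> ?T"
      using symb_one_plus_units_mem[OF one_minus_mem_one_plus(2) m, of "unit_part y # ws"] nz v_unit_part y ws
      by simp
    then show ?thesis
      using fieldR_symb_swap[of "[]" ws "unit_part y" ?u] nz wsnz ws T.m_inv_closed by simp
  qed
  ultimately have "inv\<^bsub>?G\<^esub> (?X [^]\<^bsub>?G\<^esub> v y) \<in> ?T"
    using symb_y_one_minus_mem T.m_closed T.m_inv_closed by simp
  then show ?thesis using inv_mem_subgroup_iff[OF T.subgroup_axioms group_KM] c(1) by simp
qed

lemma symb_one_minus_uniformizer_mem: "symb fieldR ((1 - y * \<pi>) # \<pi> # ws) \<in> one_plus_hatK m (Suc n)"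
proof -
  let ?G = "KM fieldR (Suc (Suc n))" and ?X = "symb fieldR ((1 - y * \<pi>) # \<pi> # ws)"
  interpret G: comm_group ?G by (rule comm_group_KM)
  interpret T: subgroup "one_plus_hatK m (Suc n)" ?G by (rule subgroup_one_plus_hatK[OF m])
  have X: "?X \<in> carrier ?G" by (rule fieldR_symb_closed) (use one_minus_nonzero uniformizer ws in simp_all)
  then have "?X = inv\<^bsub>?G\<^esub> (?X [^]\<^bsub>?G\<^esub> v y) \<otimes>\<^bsub>?G\<^esub> ?X [^]\<^bsub>?G\<^esub> (v y + 1)"
    by (simp add: G.int_pow_mult G.m_assoc[symmetric])
  then show ?thesis
    using symb_one_minus_pow_mem symb_one_minus_pow_succ_mem T.m_closed T.m_inv_closed by metis
qed

end

end

lemma symb_one_plus_uniformizer_mem: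
  assumes m: "m \<ge> 1" and u: "u \<in> one_plus v (Suc m)"
    and ws: "\<forall>w\<in>set ws. w \<noteq> 0 \<and> v w = 0" "length ws = n"
  shows "symb fieldR (u # \<pi> # ws) \<in> one_plus_hatK m (Suc n)"
proof -
  obtain x where x: "u = 1 + x" "x \<in> mpow v (Suc m)" using u by (auto simp: one_plus_def)
  show ?thesis
  proof (cases "x = 0")
    case True
    have "symb fieldR ([] @ [1] @ \<pi> # ws) = \<one>\<^bsub>KM fieldR (Suc (Suc n))\<^esub>"
      using field.symb_one_entry[OF field_fieldR, of "[]" "\<pi> # ws"] uniformizer ws
      by (simp add: fieldR_KM_gens_iff)
    then show ?thesis
      using True x subgroup.one_closed[OF subgroup_one_plus_hatK[OF m, of "Suc n"]] by simp
  next
    case False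
    define y where "y = - x / \<pi>"
    have "y \<noteq> 0" "v y = v x - 1" "u = 1 - y * \<pi>"
      unfolding y_def using False uniformizer x(1) by (simp_all add: v_divide)
    moreover have "v x \<ge> int m + 1" using False x(2) by (simp add: mpow_def)
    ultimately show ?thesis using symb_one_minus_uniformizer_mem[OF m _ _ ws] by simp
  qed
qed

lemma symb_one_plus_mem:
  assumes m: "m \<ge> 1" and u: "u \<in> one_plus v (Suc m)" and xs: "\<forall>x\<in>set xs. x \<noteq> 0" "length xs = Suc n"
  shows "symb fieldR (u # xs) \<in> one_plus_hatK m (Suc n)"
proof -
  have um: "u \<in> one_plus v m" using u one_plus_antimono[of m "Suc m"] by auto
  have "symb fieldR ([u] @ xs) \<in> one_plus_hatK m (Suc n)"
  proof (rule symb_mem_of_unit_symbs[OF subgroup_one_plus_hatK[OF m]])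
    fix ws assume "\<forall>w\<in>set ws. w \<noteq> 0 \<and> v w = 0" "length [u] + length ws = Suc (Suc n)"
    then show "symb fieldR ([u] @ ws) \<in> one_plus_hatK m (Suc n)"
      using symb_one_plus_units_mem[OF um m] by simp
  next
    fix ws assume "\<forall>w\<in>set ws. w \<noteq> 0 \<and> v w = 0" "length [u] + length ws + 1 = Suc (Suc n)"
    then show "symb fieldR ([u] @ [\<pi>] @ ws) \<in> one_plus_hatK m (Suc n)"
      using symb_one_plus_uniformizer_mem[OF m u] by simp
  qed (use xs one_plus_unit[OF um m] in simp_all)
  then show ?thesis by simp
qed

theorem prod_sub_one_plus_Suc_subset:
  assumes m: "m \<ge> 1"
  shows "prod_sub fieldR (Suc n) (one_plus v (Suc m)) (carrier (KM fieldR (Suc n))) \<subseteq> one_plus_hatK m (Suc n)"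
proof (rule field.prod_sub_carrier_subset[OF field_fieldR subgroup_one_plus_hatK[OF m]])
  show "one_plus v (Suc m) \<subseteq> carrier fieldR - {\<zero>\<^bsub>fieldR\<^esub>}" using one_plus_unit by auto
  fix u us assume "u \<in> one_plus v (Suc m)" "us \<in> KM_gens (fieldR :: 'a ring) (Suc n)"
  then show "symb fieldR (u # us) \<in> one_plus_hatK m (Suc n)"
    using symb_one_plus_mem[OF m] by (simp add: fieldR_KM_gens_iff)
qed

end

theorem lemma3p4:
  fixes v :: "'a::field \<Rightarrow> int" and n :: nat
  assumes dv: "discrete_valuation v"
    and contains_field: "\<exists>k. subfield k (valR v)"
  shows "prod_sub fieldR n (one_plus v 1) (carrier (KM fieldR n)) \<subseteq> hatK v (Suc n)
       \<and> (\<forall>m::nat. m \<ge> 1 \<longrightarrow>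
           prod_sub fieldR n (one_plus v (m + n)) (carrier (KM fieldR n))
             \<subseteq> prod_sub fieldR n (one_plus v m) (hatK v n))"
proof -
  interpret dvr v by (rule dvr.intro[OF dv])
  have "prod_sub fieldR n (one_plus v (m + n)) (carrier (KM fieldR n)) \<subseteq> one_plus_hatK m n"
    if m: "m \<ge> 1" for m
  proof (cases n)
    case 0
    then show ?thesis by simp
  next
    case (Suc k)
    have "prod_sub fieldR n (one_plus v (m + n)) (carrier (KM fieldR n))
        \<subseteq> prod_sub fieldR n (one_plus v (Suc m)) (carrier (KM fieldR n))"
      by (rule prod_sub_mono[OF one_plus_antimono]) (use Suc in simp_all)
    also have "\<dots> \<subseteq> one_plus_hatK m n"
      using prod_sub_one_plus_Suc_subset[OF m] Suc by simp
    finally show ?thesis .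
  qed
  then show ?thesis using prod_sub_one_plus_subset_hatK by blast
qed

end
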